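(* Let $f(z_1,z_2)$ be meromorphic in $z_1$ and holomorphic in $z_2$ near $(0,0)$, and consider the function $u\mapsto f(1/u,\log u/u)$ on a left half-plane $\{\mathrm{Re}\,u<-L\}$, $L\gg0$ (with a fixed branch of $\log u$). Let $a_1,\dots,a_k$ be nonzero real numbers. Then: (1) for any $A\in\mathbb{R}$ there exists $p\in\mathcal{P}(u)$ such that $|f-p|\le M|u|^{-A}$ for some constant $M$; (2) $\mathcal{P}(u)$ is closed under integration: for any $p\in\mathcal{P}(u)$ there is $P\in\mathcal{P}(u)$ with $P'=p$; (3) for any $A\in\mathbb{R}$ there exists $P_f\in\mathcal{P}(u)$ such that $|f-\Delta_{a_1,\dots,a_k}P_f|\le M|u|^{-A}$ for some constant $M$.
   Context: $\mathcal{P}(u)=\mathbb{C}[u,\tfrac1u,\log u]$ is the space of polynomials in $\log u$ with coefficients Laurent polynomials in $u$. The difference operator is $\Delta_af(u)=f(u+ia\pi)-f(u-ia\pi)$ and $\Delta_{a_1,\dots,a_k}=\Delta_{a_1}\circ\cdots\circ\Delta_{a_k}$. Estimates are understood on the half-plane $\{\mathrm{Re}\,u<-L\}$. *)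

theory Defs
  imports "HOL-Analysis.Analysis"
begin

definition holomorphic2_on :: "(complex \<times> complex \<Rightarrow> complex) \<Rightarrow> (complex \<times> complex) set \<Rightarrow> bool" where
  "holomorphic2_on g U \<longleftrightarrow>
     (\<forall>z\<in>U. \<exists>D. (g has_derivative D) (at z) \<and>
        (\<forall>(c::complex) w. D (c * fst w, c * snd w) = c * D w))"

text \<open>The space P(u) = C[u, 1/u, log u], where log u is given by the branch lg:
  finite sums of c * u^n * (log u)^j with n an integer and j a natural number.\<close>
definition Pspace :: "(complex \<Rightarrow> complex) \<Rightarrow> (complex \<Rightarrow> complex) set" where
  "Pspace lg = {p. \<exists>(S::(int \<times> nat) set) c. finite S \<and>
      (\<forall>u. p u = (\<Sum>(n,j)\<in>S. c (n,j) * u powi n * (lg u) ^ j))}"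

definition Delta :: "real \<Rightarrow> (complex \<Rightarrow> complex) \<Rightarrow> complex \<Rightarrow> complex" where
  "Delta a F u = F (u + \<i> * of_real (a * pi)) - F (u - \<i> * of_real (a * pi))"

fun Delta_list :: "real list \<Rightarrow> (complex \<Rightarrow> complex) \<Rightarrow> complex \<Rightarrow> complex" where
  "Delta_list [] F = F"
| "Delta_list (a # as) F = Delta a (Delta_list as F)"

end

theory Submission
  imports Defs "HOL-Complex_Analysis.Complex_Analysis"
begin

text \<open>Put z1 = 1/u and z2 = log u/u; both are O(|u|^-1/2). Cauchy's formula in each variable
  gives a bivariate Taylor polynomial of g with error O(|z1|^N + |z2|^N), and u^m times this
  polynomial evaluated at (z1, z2) lies in P(u), which proves (1).
  On the left half-plane the branch is log u = Ln(-u) + c, so the elements of P(u) are holomorphic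
  on the slit plane C - [0, \<infinity>), and integration by parts gives (2).
  For (3), Delta_a Q = q is solved up to O(|u|^-A) by induction on the largest exponent of u in q:
  if Q' = q/(2 i a pi), Taylor's formula at u gives Delta_a Q = q + (terms with smaller exponents)
  + a remainder bounded by Cauchy's estimate on the circle of radius |u|/2, which stays in the slit
  plane. A list of operators is handled one at a time.\<close>

section \<open>Graded pieces of P(u)\<close>

definition log_laurent :: "(complex \<Rightarrow> complex) \<Rightarrow> (int \<times> nat) set \<Rightarrow> (int \<times> nat \<Rightarrow> complex) \<Rightarrow> complex \<Rightarrow> complex" where
  "log_laurent l S c u = (\<Sum>x\<in>S. c x * u powi fst x * l u ^ snd x)"

definition Pspace_deg :: "(complex \<Rightarrow> complex) \<Rightarrow> int \<Rightarrow> (complex \<Rightarrow> complex) set" where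
  "Pspace_deg l n = {p. \<exists>S c. finite S \<and> (\<forall>x\<in>S. fst x \<le> n) \<and> p = log_laurent l S c}"

lemma Pspace_iff_Pspace_deg: "p \<in> Pspace l \<longleftrightarrow> (\<exists>n. p \<in> Pspace_deg l n)"
proof
  assume "p \<in> Pspace l"
  then obtain S c where S: "finite S" and p: "\<forall>u. p u = (\<Sum>(n,j)\<in>S. c (n,j) * u powi n * l u ^ j)"
    unfolding Pspace_def by blast
  have "p = log_laurent l S c" using p by (auto simp: log_laurent_def case_prod_beta)
  moreover have "\<forall>x\<in>S. fst x \<le> Max (insert 0 (fst ` S))" using S by auto
  ultimately show "\<exists>n. p \<in> Pspace_deg l n" using S unfolding Pspace_deg_def by blast
next
  assume "\<exists>n. p \<in> Pspace_deg l n"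
  then obtain S c where "finite S" "p = log_laurent l S c" unfolding Pspace_deg_def by blast
  then show "p \<in> Pspace l" unfolding Pspace_def by (auto simp: log_laurent_def case_prod_beta)
qed

lemma Pspace_degD: "p \<in> Pspace_deg l n \<Longrightarrow> p \<in> Pspace l"
  using Pspace_iff_Pspace_deg by blast

lemma Pspace_deg_zero: "(\<lambda>u. 0) \<in> Pspace_deg l n"
  unfolding Pspace_deg_def
  by (rule CollectI, rule exI[of _ "{}"], rule exI[of _ "\<lambda>_. 0"]) (auto simp: log_laurent_def)

lemma Pspace_deg_mono: "n \<le> n' \<Longrightarrow> p \<in> Pspace_deg l n \<Longrightarrow> p \<in> Pspace_deg l n'"
  unfolding Pspace_deg_def by force

lemma Pspace_deg_monomial: "k \<le> n \<Longrightarrow> (\<lambda>u. a * u powi k * l u ^ j) \<in> Pspace_deg l n"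
  unfolding Pspace_deg_def
  by (rule CollectI, rule exI[of _ "{(k,j)}"], rule exI[of _ "\<lambda>_. a"]) (auto simp: log_laurent_def)

lemma Pspace_deg_add:
  assumes "p \<in> Pspace_deg l n" "q \<in> Pspace_deg l n"
  shows "(\<lambda>u. p u + q u) \<in> Pspace_deg l n"
proof -
  obtain S1 c1 where S1: "finite S1" "\<forall>x\<in>S1. fst x \<le> n" "p = log_laurent l S1 c1"
    using assms(1) unfolding Pspace_deg_def by blast
  obtain S2 c2 where S2: "finite S2" "\<forall>x\<in>S2. fst x \<le> n" "q = log_laurent l S2 c2"
    using assms(2) unfolding Pspace_deg_def by blast
  define c where "c x = (if x \<in> S1 then c1 x else 0) + (if x \<in> S2 then c2 x else 0)" for x
  have "(\<lambda>u. p u + q u) = log_laurent l (S1 \<union> S2) c"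
  proof
    fix u
    define m where "m x = u powi fst x * l u ^ snd x" for x
    have e1: "(\<Sum>x\<in>S1\<union>S2. (if x \<in> S1 then c1 x else 0) * m x) = (\<Sum>x\<in>S1. c1 x * m x)"
      by (rule sum.mono_neutral_cong_right) (use S1 S2 in auto)
    have e2: "(\<Sum>x\<in>S1\<union>S2. (if x \<in> S2 then c2 x else 0) * m x) = (\<Sum>x\<in>S2. c2 x * m x)"
      by (rule sum.mono_neutral_cong_right) (use S1 S2 in auto)
    have "log_laurent l (S1 \<union> S2) c u
        = (\<Sum>x\<in>S1\<union>S2. (if x \<in> S1 then c1 x else 0) * m x + (if x \<in> S2 then c2 x else 0) * m x)"
      unfolding log_laurent_def c_def m_def by (rule sum.cong) (auto simp: algebra_simps)
    also have "\<dots> = p u + q u" unfolding sum.distrib e1 e2 using S1 S2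
      by (simp add: log_laurent_def m_def mult.assoc)
    finally show "p u + q u = log_laurent l (S1 \<union> S2) c u" by simp
  qed
  then show ?thesis unfolding Pspace_deg_def using S1 S2 by blast
qed

lemma Pspace_deg_cmult:
  assumes "p \<in> Pspace_deg l n"
  shows "(\<lambda>u. a * p u) \<in> Pspace_deg l n"
proof -
  obtain S c where S: "finite S" "\<forall>x\<in>S. fst x \<le> n" "p = log_laurent l S c"
    using assms unfolding Pspace_deg_def by blast
  have "(\<lambda>u. a * p u) = log_laurent l S (\<lambda>x. a * c x)"
    by (auto simp: S(3) log_laurent_def sum_distrib_left algebra_simps)
  then show ?thesis unfolding Pspace_deg_def using S by blast
qed

lemma Pspace_deg_sum:
  assumes "finite I" "\<And>i. i \<in> I \<Longrightarrow> f i \<in> Pspace_deg l n"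
  shows "(\<lambda>u. \<Sum>i\<in>I. f i u) \<in> Pspace_deg l n"
  using assms
proof (induction I rule: finite_induct)
  case empty
  then show ?case by (simp add: Pspace_deg_zero)
next
  case (insert x F)
  then show ?case using Pspace_deg_add[of "f x" l n "\<lambda>u. \<Sum>i\<in>F. f i u"] by simp
qed

lemma Pspace_deg_diff:
  assumes "p \<in> Pspace_deg l n" "q \<in> Pspace_deg l n"
  shows "(\<lambda>u. p u - q u) \<in> Pspace_deg l n"
  using Pspace_deg_add[OF assms(1) Pspace_deg_cmult[OF assms(2), of "-1"]] by simp

lemma Pspace_add:
  assumes "p \<in> Pspace l" "q \<in> Pspace l"
  shows "(\<lambda>u. p u + q u) \<in> Pspace l"
proof -
  obtain n1 n2 where "p \<in> Pspace_deg l n1" "q \<in> Pspace_deg l n2"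
    using assms Pspace_iff_Pspace_deg by blast
  then have "p \<in> Pspace_deg l (max n1 n2)" "q \<in> Pspace_deg l (max n1 n2)"
    using Pspace_deg_mono[of n1 "max n1 n2"] Pspace_deg_mono[of n2 "max n1 n2"] by auto
  then show ?thesis using Pspace_deg_add Pspace_iff_Pspace_deg by blast
qed

lemma Pspace_deg_change_log:
  assumes "p \<in> Pspace_deg l n"
  shows "\<exists>p'\<in>Pspace_deg l' n. \<forall>u. l u = l' u \<longrightarrow> p u = p' u"
proof -
  obtain S c where S: "finite S" "\<forall>x\<in>S. fst x \<le> n" "p = log_laurent l S c"
    using assms unfolding Pspace_deg_def by blast
  show ?thesis
    by (rule bexI[of _ "log_laurent l' S c"]) (use S in \<open>auto simp: Pspace_deg_def log_laurent_def\<close>)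
qed

lemma Pspace_change_log:
  assumes "p \<in> Pspace l"
  shows "\<exists>p'\<in>Pspace l'. \<forall>u. l u = l' u \<longrightarrow> p u = p' u"
  using assms Pspace_deg_change_log Pspace_iff_Pspace_deg by metis

section \<open>The branch Ln(-u) + c on the slit plane\<close>

definition slit_plane :: "complex set" where "slit_plane = - \<real>\<^sub>\<ge>\<^sub>0"

definition log_branch :: "complex \<Rightarrow> complex \<Rightarrow> complex" where
  "log_branch c u = Ln (- u) + c"

lemma open_slit_plane: "open slit_plane"
  unfolding slit_plane_def by (simp add: open_Compl)

lemma slit_plane_iff: "u \<in> slit_plane \<longleftrightarrow> \<not> (Re u \<ge> 0 \<and> Im u = 0)"
  unfolding slit_plane_def by (simp add: complex_nonneg_Reals_iff)

lemma slit_plane_nonzero: "u \<in> slit_plane \<Longrightarrow> u \<noteq> 0"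
  by (auto simp: slit_plane_iff)

lemma Re_neg_in_slit_plane: "Re u < 0 \<Longrightarrow> u \<in> slit_plane"
  by (auto simp: slit_plane_iff)

lemma ball_norm_subset_slit_plane:
  assumes "Re u \<le> 0" "u \<noteq> 0"
  shows "ball u (norm u) \<subseteq> slit_plane"
proof
  fix w assume w: "w \<in> ball u (norm u)"
  show "w \<in> slit_plane"
  proof (rule ccontr)
    assume "w \<notin> slit_plane"
    then have w_real: "Re w \<ge> 0" "Im w = 0" by (auto simp: slit_plane_iff)
    have "(norm u)^2 = (Re u)^2 + (Im u)^2" by (simp add: cmod_power2)
    also have "\<dots> \<le> (Re u - Re w)^2 + (Im u)^2"
      using mult_nonpos_nonneg[OF assms(1) w_real(1)] zero_le_power2[of "Re w"]
      unfolding power2_diff by linarith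
    also have "\<dots> = (norm (u - w))^2" using w_real(2) by (simp add: cmod_power2)
    finally have "norm u \<le> norm (u - w)" by (simp add: power2_le_iff_abs_le abs_le_square_iff)
    with w show False by (simp add: dist_norm)
  qed
qed

lemma log_branch_has_field_derivative:
  assumes "u \<in> slit_plane"
  shows "(log_branch c has_field_derivative inverse u) (at u)"
proof -
  have "- u \<notin> \<real>\<^sub>\<le>\<^sub>0" using assms by (auto simp: slit_plane_iff complex_nonpos_Reals_iff)
  then have "((\<lambda>u. Ln (- u)) has_field_derivative inverse (- u) * (- 1)) (at u)"
    by (intro DERIV_chain2[where g="\<lambda>u. - u", OF has_field_derivative_Ln]) (auto intro!: derivative_eq_intros)
  then show ?thesis unfolding log_branch_def
    using DERIV_add[OF _ DERIV_const] by (fastforce simp: inverse_minus_eq)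
qed

lemma log_monomial_has_field_derivative:
  assumes "u \<in> slit_plane"
  shows "((\<lambda>u. u powi k * log_branch c u ^ j) has_field_derivative
     (of_int k * u powi (k-1) * log_branch c u ^ j + of_nat j * u powi (k-1) * log_branch c u ^ (j-1))) (at u)"
proof -
  have nz: "u \<noteq> 0" using slit_plane_nonzero[OF assms] .
  have d1: "((\<lambda>u. u powi k) has_field_derivative of_int k * u powi (k-1)) (at u)"
    by (intro derivative_eq_intros) (auto simp: nz)
  have d2: "((\<lambda>u. log_branch c u ^ j) has_field_derivative of_nat j * log_branch c u ^ (j-1) * inverse u) (at u)"
    using DERIV_power[OF log_branch_has_field_derivative[OF assms, of c], of j] by (simp add: mult_ac)
  have e: "u powi k * inverse u = u powi (k-1)"
    using nz by (simp add: power_int_diff field_simps)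
  show ?thesis
    by (rule DERIV_cong[OF DERIV_mult[OF d1 d2]]) (simp add: algebra_simps flip: e)
qed

lemma Pspace_deg_has_field_derivative:
  assumes "p \<in> Pspace_deg (log_branch c) n"
  shows "\<exists>q\<in>Pspace_deg (log_branch c) (n-1). \<forall>u\<in>slit_plane. (p has_field_derivative q u) (at u)"
proof -
  let ?L = "log_branch c"
  obtain S a where S: "finite S" "\<forall>x\<in>S. fst x \<le> n" "p = log_laurent ?L S a"
    using assms unfolding Pspace_deg_def by blast
  define q where "q u = (\<Sum>x\<in>S. a x * (of_int (fst x) * u powi (fst x - 1) * ?L u ^ snd x
        + of_nat (snd x) * u powi (fst x - 1) * ?L u ^ (snd x - 1)))" for u
  have "q \<in> Pspace_deg ?L (n-1)"
    unfolding q_def distrib_left mult.assoc[symmetric]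
    by (intro Pspace_deg_sum Pspace_deg_add Pspace_deg_monomial) (use S in auto)
  moreover have "(p has_field_derivative q u) (at u)" if "u \<in> slit_plane" for u
  proof -
    have "p = (\<lambda>u. \<Sum>x\<in>S. a x * (u powi fst x * ?L u ^ snd x))"
      using S(3) by (auto simp: log_laurent_def mult.assoc)
    then show ?thesis unfolding q_def
      by (simp only:) (intro DERIV_sum DERIV_cmult log_monomial_has_field_derivative that)
  qed
  ultimately show ?thesis by blast
qed

lemma Pspace_deg_holomorphic:
  assumes "p \<in> Pspace_deg (log_branch c) n"
  shows "p holomorphic_on slit_plane"
  using Pspace_deg_has_field_derivative[OF assms] open_slit_plane by (auto simp: holomorphic_on_open)

lemma Pspace_deg_higher_deriv:
  assumes "p \<in> Pspace_deg (log_branch c) n"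
  shows "\<exists>q\<in>Pspace_deg (log_branch c) (n - int k). \<forall>u\<in>slit_plane. (deriv ^^ k) p u = q u"
proof (induction k)
  case 0
  then show ?case using assms by auto
next
  case (Suc k)
  then obtain q where q: "q \<in> Pspace_deg (log_branch c) (n - int k)" "\<forall>u\<in>slit_plane. (deriv ^^ k) p u = q u"
    by blast
  obtain q' where q': "q' \<in> Pspace_deg (log_branch c) (n - int k - 1)"
    "\<forall>u\<in>slit_plane. (q has_field_derivative q' u) (at u)"
    using Pspace_deg_has_field_derivative[OF q(1)] by blast
  have "(deriv ^^ Suc k) p u = q' u" if u: "u \<in> slit_plane" for u
  proof -
    have "eventually (\<lambda>x. (deriv ^^ k) p x = q x) (nhds u)"
      using q(2) open_slit_plane u by (auto simp: eventually_nhds)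
    then have "deriv ((deriv ^^ k) p) u = deriv q u" by (rule deriv_cong_ev) simp
    also have "\<dots> = q' u" using q'(2) u DERIV_imp_deriv by blast
    finally show ?thesis by simp
  qed
  moreover have "n - int k - 1 = n - int (Suc k)" by simp
  ultimately show ?case using q'(1) by metis
qed

lemma log_monomial_antiderivative:
  "\<exists>Q\<in>Pspace_deg (log_branch c) (k+1).
     \<forall>u\<in>slit_plane. (Q has_field_derivative u powi k * log_branch c u ^ j) (at u)"
proof (cases "k = -1")
  case True
  let ?Q = "\<lambda>u. (1 / of_nat (Suc j)) * u powi 0 * log_branch c u ^ Suc j"
  have "(?Q has_field_derivative u powi k * log_branch c u ^ j) (at u)" if "u \<in> slit_plane" for u
    using DERIV_cmult[OF log_monomial_has_field_derivative[OF that, of 0 c "Suc j"], of "1 / of_nat (Suc j)"]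
    by (simp add: True mult.assoc del: of_nat_Suc)
  moreover have "?Q \<in> Pspace_deg (log_branch c) (k+1)"
    by (rule Pspace_deg_monomial) (simp add: True)
  ultimately show ?thesis by blast
next
  case False
  then have nz: "(of_int (k+1) :: complex) \<noteq> 0" by (metis add.commute add_eq_0_iff of_int_eq_0_iff)
  show ?thesis
  proof (induction j)
    case 0
    let ?Q = "\<lambda>u. (1 / of_int (k+1)) * u powi (k+1) * log_branch c u ^ 0"
    have "(?Q has_field_derivative u powi k * log_branch c u ^ 0) (at u)" if "u \<in> slit_plane" for u
      using DERIV_cmult[OF log_monomial_has_field_derivative[OF that, of "k+1" c 0], of "1 / of_int (k+1)"] nz
      by (simp add: mult.assoc)
    moreover have "?Q \<in> Pspace_deg (log_branch c) (k+1)" by (rule Pspace_deg_monomial) simp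
    ultimately show ?case by blast
  next
    case (Suc j)
    then obtain Q where Q: "Q \<in> Pspace_deg (log_branch c) (k+1)"
      "\<forall>u\<in>slit_plane. (Q has_field_derivative u powi k * log_branch c u ^ j) (at u)"
      by blast
    \<comment> \<open>integration by parts\<close>
    define R where "R u = (1 / of_int (k+1)) * u powi (k+1) * log_branch c u ^ Suc j
        - (of_nat (Suc j) / of_int (k+1)) * Q u" for u
    have "R \<in> Pspace_deg (log_branch c) (k+1)" unfolding R_def
      by (intro Pspace_deg_diff Pspace_deg_monomial Pspace_deg_cmult Q(1)) simp
    moreover have "(R has_field_derivative u powi k * log_branch c u ^ Suc j) (at u)"
      if u: "u \<in> slit_plane" for u
    proof -
      have d1: "((\<lambda>u. (1 / of_int (k+1)) * (u powi (k+1) * log_branch c u ^ Suc j)) has_field_derivative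
          (1 / of_int (k+1)) * (of_int (k+1) * u powi (k+1-1) * log_branch c u ^ Suc j
            + of_nat (Suc j) * u powi (k+1-1) * log_branch c u ^ (Suc j - 1))) (at u)"
        by (rule DERIV_cmult, rule log_monomial_has_field_derivative[OF u])
      have d2: "((\<lambda>u. (of_nat (Suc j) / of_int (k+1)) * Q u) has_field_derivative
          (of_nat (Suc j) / of_int (k+1)) * (u powi k * log_branch c u ^ j)) (at u)"
        by (rule DERIV_cmult, rule Q(2)[rule_format, OF u])
      have "(1/K) * (K * x + s * y) - (s/K) * y = x" if "K \<noteq> 0" for K x s y :: complex
        using that by (simp add: field_simps)
      from this[OF nz, of "u powi k * log_branch c u ^ Suc j" "of_nat (Suc j)" "u powi k * log_branch c u ^ j"]
      show ?thesis unfolding R_def mult.assoc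
        by (intro DERIV_cong[OF DERIV_diff[OF d1 d2]]) (simp add: mult.assoc)
    qed
    ultimately show ?case by blast
  qed
qed

lemma Pspace_deg_antiderivative:
  assumes "p \<in> Pspace_deg (log_branch c) n"
  shows "\<exists>Q\<in>Pspace_deg (log_branch c) (n+1). \<forall>u\<in>slit_plane. (Q has_field_derivative p u) (at u)"
proof -
  let ?L = "log_branch c"
  obtain S a where S: "finite S" "\<forall>x\<in>S. fst x \<le> n" "p = log_laurent ?L S a"
    using assms unfolding Pspace_deg_def by blast
  have "\<forall>x\<in>S. \<exists>Q. Q \<in> Pspace_deg ?L (n+1) \<and>
      (\<forall>u\<in>slit_plane. (Q has_field_derivative u powi fst x * ?L u ^ snd x) (at u))"
    using log_monomial_antiderivative Pspace_deg_mono S(2) by (metis add_right_mono)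
  then obtain F where F: "\<And>x. x \<in> S \<Longrightarrow> F x \<in> Pspace_deg ?L (n+1)"
    "\<And>x u. x \<in> S \<Longrightarrow> u \<in> slit_plane \<Longrightarrow> (F x has_field_derivative u powi fst x * ?L u ^ snd x) (at u)"
    by metis
  define Q where "Q u = (\<Sum>x\<in>S. a x * F x u)" for u
  have "Q \<in> Pspace_deg ?L (n+1)" unfolding Q_def
    by (intro Pspace_deg_sum Pspace_deg_cmult F S(1))
  moreover have "(Q has_field_derivative p u) (at u)" if "u \<in> slit_plane" for u
  proof -
    have "(Q has_field_derivative (\<Sum>x\<in>S. a x * (u powi fst x * ?L u ^ snd x))) (at u)"
      unfolding Q_def by (intro DERIV_sum DERIV_cmult F that)
    then show ?thesis using S(3) by (simp add: log_laurent_def mult.assoc)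
  qed
  ultimately show ?thesis by blast
qed

section \<open>Growth bounds and Taylor remainders\<close>

lemma norm_log_branch_le:
  assumes "u \<in> slit_plane"
  shows "norm (log_branch c u) \<le> \<bar>ln (norm u)\<bar> + pi + norm c"
proof -
  have nz: "- u \<noteq> 0" using slit_plane_nonzero[OF assms] by simp
  have "norm (Ln (- u)) \<le> \<bar>Re (Ln (-u))\<bar> + \<bar>Im (Ln (-u))\<bar>" by (rule cmod_le)
  also have "\<dots> \<le> \<bar>ln (norm u)\<bar> + pi"
    using mpi_less_Im_Ln[OF nz] Im_Ln_le_pi[OF nz] Re_Ln[OF nz] by auto
  finally show ?thesis unfolding log_branch_def using norm_triangle_ineq[of "Ln (-u)" c] by linarith
qed

lemma ln_plus_const_power_le_sqrt:
  assumes "K \<ge> 0"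
  shows "\<exists>C\<ge>0. \<forall>x::real. x \<ge> 1 \<longrightarrow> (ln x + K) ^ j \<le> C * x powr (1/2)"
proof (cases "j = 0")
  case True
  then show ?thesis by (intro exI[of _ 1]) (auto intro: ge_one_powr_ge_zero)
next
  case False
  define e where "e = 1 / (2 * real j)"
  have e: "e > 0" using False by (simp add: e_def)
  show ?thesis
  proof (intro exI[of _ "(2 * real j + K) ^ j"] conjI allI impI)
    show "0 \<le> (2 * real j + K) ^ j" using assms by simp
    fix x :: real assume x: "x \<ge> 1"
    have "ln (x powr e) \<le> x powr e - 1" by (rule ln_le_minus_one) (use x in simp)
    then have "e * ln x \<le> x powr e" using x by (simp add: ln_powr)
    then have "ln x \<le> 2 * real j * x powr e" using False by (simp add: e_def field_simps)
    moreover have "1 \<le> x powr e" using x e by (simp add: ge_one_powr_ge_zero)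
    ultimately have "ln x + K \<le> (2 * real j + K) * x powr e"
      using mult_right_mono[OF \<open>1 \<le> x powr e\<close> assms] by (simp add: algebra_simps)
    moreover have "0 \<le> ln x + K" using x assms by simp
    ultimately have "(ln x + K) ^ j \<le> ((2 * real j + K) * x powr e) ^ j"
      by (rule power_mono)
    also have "\<dots> = (2 * real j + K) ^ j * x powr (1/2)"
      using False x by (simp add: power_mult_distrib e_def powr_realpow[symmetric] powr_powr)
    finally show "(ln x + K) ^ j \<le> (2 * real j + K) ^ j * x powr (1/2)" .
  qed
qed

lemma Pspace_deg_norm_bound:
  assumes "p \<in> Pspace_deg (log_branch c) n"
  shows "\<exists>C\<ge>0. \<forall>u\<in>slit_plane. norm u \<ge> 1 \<longrightarrow> norm (p u) \<le> C * norm u powr (real_of_int n + 1/2)"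
proof -
  let ?L = "log_branch c"
  define K where "K = pi + norm c"
  have K: "K \<ge> 0" unfolding K_def using pi_gt_zero norm_ge_zero[of c] by linarith
  obtain S a where S: "finite S" "\<forall>x\<in>S. fst x \<le> n" "p = log_laurent ?L S a"
    using assms unfolding Pspace_deg_def by blast
  obtain Cf where Cf: "\<And>j. Cf j \<ge> 0" "\<And>j x. x \<ge> 1 \<Longrightarrow> (ln x + K) ^ j \<le> Cf j * x powr (1/2)"
    using ln_plus_const_power_le_sqrt[OF K] by metis
  define C where "C = (\<Sum>x\<in>S. norm (a x) * Cf (snd x))"
  show ?thesis
  proof (intro exI[of _ C] conjI ballI impI)
    show "0 \<le> C" unfolding C_def by (intro sum_nonneg mult_nonneg_nonneg) (auto simp: Cf)
    fix u assume u: "u \<in> slit_plane" "1 \<le> norm u"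
    have term_le: "norm (a x * u powi fst x * ?L u ^ snd x)
        \<le> norm (a x) * Cf (snd x) * norm u powr (real_of_int n + 1/2)" if x: "x \<in> S" for x
    proof -
      have "norm (u powi fst x) = norm u powr real_of_int (fst x)"
        using u powr_real_of_int'[of "norm u" "fst x"] slit_plane_nonzero[OF u(1)]
        by (simp add: norm_power_int)
      also have "\<dots> \<le> norm u powr real_of_int n" using S(2) x u by (intro powr_mono) auto
      finally have upow: "norm (u powi fst x) \<le> norm u powr real_of_int n" .
      have "norm (?L u) \<le> ln (norm u) + K"
        using norm_log_branch_le[OF u(1), of c] u(2) by (simp add: K_def)
      then have "norm (?L u) ^ snd x \<le> (ln (norm u) + K) ^ snd x"
        by (intro power_mono) auto
      also have "\<dots> \<le> Cf (snd x) * norm u powr (1/2)" using Cf(2) u(2) by blast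
      finally have lpow: "norm (?L u ^ snd x) \<le> Cf (snd x) * norm u powr (1/2)"
        by (simp add: norm_power)
      have "norm (a x * u powi fst x * ?L u ^ snd x) = norm (a x) * norm (u powi fst x) * norm (?L u ^ snd x)"
        by (simp add: norm_mult)
      also have "\<dots> \<le> norm (a x) * norm u powr real_of_int n * (Cf (snd x) * norm u powr (1/2))"
        by (intro mult_mono upow lpow mult_left_mono) (auto simp: Cf)
      also have "\<dots> = norm (a x) * Cf (snd x) * norm u powr (real_of_int n + 1/2)"
        using u by (simp add: powr_add)
      finally show ?thesis .
    qed
    have "norm (p u) \<le> (\<Sum>x\<in>S. norm (a x * u powi fst x * ?L u ^ snd x))"
      unfolding S(3) log_laurent_def by (rule norm_sum)
    also have "\<dots> \<le> C * norm u powr (real_of_int n + 1/2)"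
      unfolding C_def sum_distrib_right by (intro sum_mono term_le)
    finally show "norm (p u) \<le> C * norm u powr (real_of_int n + 1/2)" .
  qed
qed

lemma holomorphic_taylor_remainder_bound:
  fixes F :: "complex \<Rightarrow> complex"
  assumes holo: "F holomorphic_on ball z R" and r: "0 < r" "r < R"
    and B: "\<And>w. norm (w - z) = r \<Longrightarrow> norm (F w) \<le> B"
    and x: "norm (x - z) \<le> r / 2"
  shows "norm (F x - (\<Sum>k<K. (deriv ^^ k) F z / fact k * (x - z) ^ k)) \<le> 2 * B * (norm (x - z) / r) ^ K"
proof -
  define a where "a k = (deriv ^^ k) F z / fact k * (x - z) ^ k" for k
  define q where "q = norm (x - z) / r"
  have q: "0 \<le> q" "q \<le> 1/2" using x r by (auto simp: q_def field_simps)
  have "x \<in> ball z R" using x r by (auto simp: dist_norm norm_minus_commute)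
  then have "a sums F x" unfolding a_def by (rule holomorphic_power_series[OF holo])
  then have tail: "(\<lambda>i. a (i + K)) sums (F x - (\<Sum>k<K. a k))"
    using sums_iff_shift'[of a K "F x"] by simp
  have "norm ((z + of_real r) - z) = r" using r by simp
  then have B0: "0 \<le> B" using B norm_ge_zero order_trans by blast
  have ak: "norm (a k) \<le> B * q ^ k" for k
  proof -
    have "norm ((deriv ^^ k) F z) \<le> fact k * B / r ^ k"
    proof (rule Cauchy_inequality[OF _ _ r(1)])
      show "F holomorphic_on ball z r" using holomorphic_on_subset[OF holo] r by (simp add: subset_ball)
      show "continuous_on (cball z r) F"
        using r by (intro continuous_on_subset[OF holomorphic_on_imp_continuous_on[OF holo]]) auto
    qed (use B in \<open>auto simp: norm_minus_commute\<close>)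
    then have "norm ((deriv ^^ k) F z) / fact k * norm (x - z) ^ k \<le> fact k * B / r ^ k / fact k * norm (x - z) ^ k"
      by (intro mult_right_mono divide_right_mono) auto
    then show ?thesis using r by (simp add: a_def q_def norm_mult norm_divide norm_power power_divide)
  qed
  have geom: "(\<lambda>i. B * q ^ K * q ^ i) sums (B * q ^ K * (1 / (1 - q)))"
    by (rule sums_mult, rule geometric_sums) (use q in auto)
  have "norm (F x - (\<Sum>k<K. a k)) = norm (\<Sum>i. a (i + K))" using sums_unique[OF tail] by simp
  also have "\<dots> \<le> (\<Sum>i. B * q ^ K * q ^ i)"
  proof (rule norm_suminf_le)
    show "norm (a (n + K)) \<le> B * q ^ K * q ^ n" for n
      using ak[of "n+K"] by (simp add: power_add mult.assoc mult.commute[of "q^n"])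
    show "summable (\<lambda>i. B * q ^ K * q ^ i)" using geom by (rule sums_summable)
  qed
  also have "\<dots> = B * q ^ K * (1 / (1 - q))" using sums_unique[OF geom] by simp
  also have "\<dots> \<le> B * q ^ K * 2"
    by (intro mult_left_mono) (use q B0 in \<open>auto simp: field_simps\<close>)
  finally show ?thesis unfolding a_def q_def by (simp add: mult_ac)
qed

lemma powr_le_of_within_factor_two:
  fixes x y e :: real
  assumes "x / 2 \<le> y" "y \<le> 2 * x" "0 < x"
  shows "y powr e \<le> 2 powr \<bar>e\<bar> * x powr e"
proof -
  have y: "0 < y" using assms by simp
  have "(y / x) powr e \<le> 2 powr \<bar>e\<bar>"
  proof (cases "e \<ge> 0")
    case True
    have "(y / x) powr e \<le> 2 powr e" using assms True by (intro powr_mono2) (auto simp: field_simps)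
    then show ?thesis using True by simp
  next
    case False
    have "(y / x) powr e = (x / y) powr (- e)" using assms y by (simp add: powr_minus_divide powr_divide)
    also have "\<dots> \<le> 2 powr (- e)" using assms False y by (intro powr_mono2) (auto simp: field_simps)
    finally show ?thesis using False by simp
  qed
  moreover have "y powr e = (y / x) powr e * x powr e" using assms y by (simp add: powr_divide)
  ultimately show ?thesis by (simp add: mult_right_mono)
qed

text \<open>Cauchy's estimate on the circle of radius |u|/2 around u, which lies in the slit plane.\<close>

lemma Pspace_deg_taylor_remainder:
  assumes "Q \<in> Pspace_deg (log_branch c) n"
  obtains M where "M \<ge> 0"
    "\<And>u h. Re u < 0 \<Longrightarrow> 2 \<le> norm u \<Longrightarrow> 4 * norm h \<le> norm u \<Longrightarrow>
       norm (Q (u + h) - (\<Sum>k<K. (deriv ^^ k) Q u / fact k * h ^ k))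
         \<le> M * norm h ^ K * norm u powr (real_of_int n + 1/2 - real K)"
proof -
  define e where "e = real_of_int n + 1/2"
  obtain C where C: "C \<ge> 0" "\<forall>u\<in>slit_plane. norm u \<ge> 1 \<longrightarrow> norm (Q u) \<le> C * norm u powr e"
    using Pspace_deg_norm_bound[OF assms] unfolding e_def by blast
  define M where "M = 2 * C * 2 powr \<bar>e\<bar> * 2 ^ K"
  have "norm (Q (u + h) - (\<Sum>k<K. (deriv ^^ k) Q u / fact k * h ^ k)) \<le> M * norm h ^ K * norm u powr (e - real K)"
    if u: "Re u < 0" "2 \<le> norm u" and h: "4 * norm h \<le> norm u" for u h
  proof -
    define r where "r = norm u / 2"
    have r: "0 < r" "r < norm u" using u by (auto simp: r_def)
    have ball: "ball u (norm u) \<subseteq> slit_plane"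
      using u by (intro ball_norm_subset_slit_plane) auto
    define B where "B = C * (2 powr \<bar>e\<bar> * norm u powr e)"
    have B: "norm (Q w) \<le> B" if w: "norm (w - u) = r" for w
    proof -
      have "w \<in> slit_plane" using w r ball by (auto simp: dist_norm norm_minus_commute)
      moreover have w1: "norm u / 2 \<le> norm w"
        using w norm_triangle_ineq2[of u "u - w"] by (simp add: r_def norm_minus_commute)
      moreover have w2: "norm w \<le> 2 * norm u"
        using w u norm_triangle_ineq[of u "w - u"] by (simp add: r_def)
      ultimately have "norm (Q w) \<le> C * norm w powr e" using C u by auto
      also have "\<dots> \<le> B" unfolding B_def
        by (intro mult_left_mono powr_le_of_within_factor_two w1 w2) (use u C in auto)
      finally show ?thesis .
    qed
    have "norm (Q (u + h) - (\<Sum>k<K. (deriv ^^ k) Q u / fact k * h ^ k)) \<le> 2 * B * (norm h / r) ^ K"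
      using holomorphic_taylor_remainder_bound[OF holomorphic_on_subset[OF Pspace_deg_holomorphic[OF assms] ball]
          r B, of "u + h" K] h by (auto simp: r_def)
    also have "\<dots> = M * norm h ^ K * norm u powr (e - real K)"
      using u powr_realpow[of "norm u" K]
      by (auto simp: B_def M_def r_def power_divide powr_diff field_simps)
    finally show ?thesis .
  qed
  then show ?thesis using that[of M] C(1) by (simp add: M_def e_def)
qed

section \<open>The difference equation\<close>

definition Delta_solvable ::
  "(complex \<Rightarrow> complex) \<Rightarrow> real list \<Rightarrow> real \<Rightarrow> real \<Rightarrow> (complex \<Rightarrow> complex) \<Rightarrow> bool" where
  "Delta_solvable l as R A q \<longleftrightarrow> (\<exists>Q\<in>Pspace l. \<exists>M. \<forall>u. Re u < 0 \<longrightarrow> R \<le> norm u \<longrightarrow>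
     norm (q u - Delta_list as Q u) \<le> M * norm u powr (-A))"

lemma Delta_list_zero: "Delta_list as (\<lambda>u. 0) = (\<lambda>u. 0)"
  by (induction as) (auto simp: Delta_def)

lemma Delta_solvable_low_degree:
  assumes "real_of_int n + 1/2 \<le> - A" "R \<ge> 1" "q \<in> Pspace_deg (log_branch c) n"
  shows "Delta_solvable (log_branch c) as R A q"
proof -
  obtain C where C: "C \<ge> 0" "\<forall>u\<in>slit_plane. norm u \<ge> 1 \<longrightarrow> norm (q u) \<le> C * norm u powr (real_of_int n + 1/2)"
    using Pspace_deg_norm_bound[OF assms(3)] by blast
  have "norm (q u - Delta_list as (\<lambda>u. 0) u) \<le> C * norm u powr (-A)" if "Re u < 0" "R \<le> norm u" for u
  proof -
    have "norm (q u) \<le> C * norm u powr (real_of_int n + 1/2)"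
      using C(2) Re_neg_in_slit_plane that assms(2) by auto
    also have "\<dots> \<le> C * norm u powr (-A)" using that assms C(1) by (intro mult_left_mono powr_mono) auto
    finally show ?thesis by (simp add: Delta_list_zero)
  qed
  moreover have "(\<lambda>u. 0) \<in> Pspace (log_branch c)" using Pspace_deg_zero Pspace_degD by blast
  ultimately show ?thesis unfolding Delta_solvable_def by blast
qed

lemma taylor_sum_odd_difference:
  fixes d :: "nat \<Rightarrow> 'a::field_char_0"
  assumes "K \<ge> 2"
  shows "(\<Sum>k<K. d k / fact k * h ^ k) - (\<Sum>k<K. d k / fact k * (-h) ^ k)
    = 2 * h * d 1 - (\<Sum>k=2..<K. ((-h) ^ k - h ^ k) / fact k * d k)"
proof -
  define f where "f k = d k / fact k * (h ^ k - (-h) ^ k)" for k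
  have "(\<Sum>k<K. d k / fact k * h ^ k) - (\<Sum>k<K. d k / fact k * (-h) ^ k) = (\<Sum>k<K. f k)"
    unfolding f_def by (simp add: sum_subtractf[symmetric] right_diff_distrib)
  also have "\<dots> = f 0 + f 1 + (\<Sum>k=2..<K. f k)"
    using assms by (simp add: sum.atLeast0_lessThan_Suc_shift lessThan_atLeast0 sum.atLeast_Suc_lessThan
        numeral_2_eq_2 flip: atLeast0LessThan)
  also have "(\<Sum>k=2..<K. f k) = - (\<Sum>k=2..<K. ((-h) ^ k - h ^ k) / fact k * d k)"
    unfolding f_def sum_negf[symmetric] by (rule sum.cong) (auto simp: field_simps)
  finally show ?thesis by (simp add: f_def)
qed

text \<open>If Q0' = q/(2h) with h = i a pi, Taylor's formula at u gives
  Delta_a Q0 = q - s + O(|u|^-A), where s collects the terms of order k \<ge> 2, which have lower degree.\<close>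

lemma Delta_solvable_degree_step:
  fixes a A R :: real
  assumes a: "a \<noteq> 0" and R: "R \<ge> 2" "R \<ge> 4 * \<bar>a\<bar> * pi"
    and IH: "\<forall>s\<in>Pspace_deg (log_branch c) (n-1). Delta_solvable (log_branch c) [a] R A s"
    and q: "q \<in> Pspace_deg (log_branch c) n"
  shows "Delta_solvable (log_branch c) [a] R A q"
proof -
  let ?L = "log_branch c"
  define h where "h = \<i> * complex_of_real (a * pi)"
  have h: "h \<noteq> 0" "norm h = \<bar>a\<bar> * pi" using a by (auto simp: h_def norm_mult)
  obtain Q0 where Q0: "Q0 \<in> Pspace_deg ?L (n+1)"
    "\<forall>u\<in>slit_plane. (Q0 has_field_derivative (1/(2*h)) * q u) (at u)"
    using Pspace_deg_antiderivative[OF Pspace_deg_cmult[OF q, of "1/(2*h)"]] by auto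
  obtain G where G: "\<And>k. G k \<in> Pspace_deg ?L (n+1-int k)"
    "\<And>k u. u \<in> slit_plane \<Longrightarrow> (deriv^^k) Q0 u = G k u"
    using Pspace_deg_higher_deriv[OF Q0(1)] by metis
  define K where "K = nat \<lceil>real_of_int n + 3/2 + A\<rceil> + 2"
  have K: "K \<ge> 2" "real_of_int (n+1) + 1/2 - real K \<le> -A" unfolding K_def by linarith+
  obtain M where M: "M \<ge> 0"
    "\<And>u h. Re u < 0 \<Longrightarrow> 2 \<le> norm u \<Longrightarrow> 4 * norm h \<le> norm u \<Longrightarrow>
       norm (Q0 (u + h) - (\<Sum>k<K. (deriv ^^ k) Q0 u / fact k * h ^ k))
         \<le> M * norm h ^ K * norm u powr (real_of_int (n+1) + 1/2 - real K)"
    using Pspace_deg_taylor_remainder[OF Q0(1)] by blast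
  define s where "s u = (\<Sum>k=2..<K. (((-h)^k - h^k) / fact k) * G k u)" for u
  have "s \<in> Pspace_deg ?L (n-1)" unfolding s_def
    by (intro Pspace_deg_sum Pspace_deg_cmult Pspace_deg_mono[OF _ G(1)]) auto
  then obtain Q1 M1 where Q1: "Q1 \<in> Pspace ?L"
    "\<And>u. Re u < 0 \<Longrightarrow> R \<le> norm u \<Longrightarrow> norm (s u - Delta a Q1 u) \<le> M1 * norm u powr (-A)"
    using IH unfolding Delta_solvable_def Delta_list.simps by blast
  have "norm (q u - Delta a (\<lambda>u. Q0 u + Q1 u) u) \<le> (M1 + 2 * M * norm h ^ K) * norm u powr (-A)"
    if u: "Re u < 0" "R \<le> norm u" for u
  proof -
    have uS: "u \<in> slit_plane" using Re_neg_in_slit_plane u by auto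
    have hu: "4 * norm h \<le> norm u" "2 \<le> norm u" using u R h by auto
    define T where "T x = (\<Sum>k<K. (deriv^^k) Q0 u / fact k * x^k)" for x
    have "T h - T (-h) = q u - s u"
      using taylor_sum_odd_difference[OF K(1), of "\<lambda>k. (deriv^^k) Q0 u" h] h(1)
        DERIV_imp_deriv[OF Q0(2)[rule_format, OF uS]]
      by (simp add: T_def s_def G(2)[OF uS])
    then have "q u - Delta a (\<lambda>u. Q0 u + Q1 u) u
        = (s u - Delta a Q1 u) + ((T h - Q0 (u + h)) - (T (-h) - Q0 (u + - h)))"
      by (simp add: Delta_def h_def algebra_simps)
    then have "norm (q u - Delta a (\<lambda>u. Q0 u + Q1 u) u)
       \<le> norm (s u - Delta a Q1 u) + (norm (Q0 (u + h) - T h) + norm (Q0 (u + - h) - T (-h)))"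
      by (smt (verit) norm_minus_commute norm_triangle_ineq4 norm_triangle_ineq)
    also have "\<dots> \<le> M1 * norm u powr (-A) + 2 * M * norm h ^ K * norm u powr (-A)"
    proof -
      have rem: "norm (Q0 (u + x) - T x) \<le> M * norm h ^ K * norm u powr (-A)" if "norm x = norm h" for x
      proof -
        have "norm (Q0 (u + x) - T x) \<le> M * norm h ^ K * norm u powr (real_of_int (n+1) + 1/2 - real K)"
          using M(2)[of u x] that u hu unfolding T_def by auto
        also have "\<dots> \<le> M * norm h ^ K * norm u powr (-A)"
          using K(2) hu M(1) by (intro mult_left_mono powr_mono) auto
        finally show ?thesis .
      qed
      show ?thesis using rem[of h] rem[of "-h"] Q1(2)[OF u] by simp
    qed
    finally show ?thesis by (simp add: algebra_simps)
  qed
  moreover have "(\<lambda>u. Q0 u + Q1 u) \<in> Pspace ?L" by (rule Pspace_add[OF Pspace_degD[OF Q0(1)] Q1(1)])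
  ultimately show ?thesis unfolding Delta_solvable_def by auto
qed

lemma Delta_solvable_Pspace_deg:
  fixes a A R :: real
  assumes "a \<noteq> 0" "R \<ge> 2" "R \<ge> 4 * \<bar>a\<bar> * pi" "q \<in> Pspace_deg (log_branch c) n"
  shows "Delta_solvable (log_branch c) [a] R A q"
proof -
  define n0 where "n0 = - \<lceil>A\<rceil> - 1"
  have "\<forall>q\<in>Pspace_deg (log_branch c) (n0 + int k). Delta_solvable (log_branch c) [a] R A q" for k
  proof (induction k)
    case 0
    have "real_of_int n0 + 1/2 \<le> - A" unfolding n0_def by linarith
    then show ?case using Delta_solvable_low_degree assms(2) by auto
  next
    case (Suc k)
    show ?case
    proof
      fix q assume "q \<in> Pspace_deg (log_branch c) (n0 + int (Suc k))"
      then show "Delta_solvable (log_branch c) [a] R A q"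
        by (rule Delta_solvable_degree_step[OF assms(1-3), rotated]) (use Suc.IH in simp)
    qed
  qed
  moreover have "n \<le> n0 + int (nat (n - n0))" by simp
  ultimately show ?thesis using Pspace_deg_mono assms(4) by blast
qed

lemma norm_Delta_le_shifted_bound:
  fixes a A M R :: real
  assumes A: "A \<ge> 0" and R: "R \<ge> 1"
    and E: "\<And>v. Re v < 0 \<Longrightarrow> R \<le> norm v \<Longrightarrow> norm (E v) \<le> M * norm v powr (-A)"
    and u: "Re u < 0" "R + 4 * \<bar>a\<bar> * pi \<le> norm u"
  shows "norm (Delta a E u) \<le> 2 * \<bar>M\<bar> * (3/4) powr (-A) * norm u powr (-A)"
proof -
  define h where "h = \<i> * complex_of_real (a * pi)"
  have h: "4 * norm h = 4 * \<bar>a\<bar> * pi" "0 \<le> norm h" by (simp_all add: h_def norm_mult)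
  have hu: "norm h \<le> norm u / 4" "1 \<le> norm u" using u R h by linarith+
  have shift: "norm (E v) \<le> \<bar>M\<bar> * (3/4) powr (-A) * norm u powr (-A)" if v: "v = u + h \<or> v = u - h" for v
  proof -
    have "Re v < 0" using v u by (auto simp: h_def)
    moreover have nv: "norm v \<ge> norm u - norm h"
      using v norm_triangle_ineq2[of u "-h"] norm_triangle_ineq2[of u h] by (auto simp: norm_minus_commute)
    moreover have "R \<le> norm v" using nv u h by linarith
    ultimately have "norm (E v) \<le> M * norm v powr (-A)" using E by blast
    also have "\<dots> \<le> \<bar>M\<bar> * norm v powr (-A)" by (intro mult_right_mono) auto
    also have "norm v powr (-A) \<le> (3/4 * norm u) powr (-A)"
      using nv hu A by (intro powr_mono2') auto
    also have "\<dots> = (3/4) powr (-A) * norm u powr (-A)" using powr_mult[of "3/4" "norm u" "-A"] hu by simp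
    finally show ?thesis by (simp add: mult_left_mono mult.assoc)
  qed
  have "norm (Delta a E u) \<le> norm (E (u + h)) + norm (E (u - h))"
    unfolding Delta_def h_def by (rule norm_triangle_ineq4)
  also have "\<dots> \<le> 2 * \<bar>M\<bar> * (3/4) powr (-A) * norm u powr (-A)"
    using shift[of "u + h"] shift[of "u - h"] by simp
  finally show ?thesis .
qed

definition Delta_radius :: "real list \<Rightarrow> real" where
  "Delta_radius as = 2 + (\<Sum>a\<leftarrow>as. 4 * \<bar>a\<bar> * pi)"

lemma Delta_radius_ge_two: "Delta_radius as \<ge> 2"
  unfolding Delta_radius_def by (induction as) auto

lemma Delta_radius_Cons: "Delta_radius (a # as) = Delta_radius as + 4 * \<bar>a\<bar> * pi"
  unfolding Delta_radius_def by simp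

text \<open>Solve Delta_a Q1 = q, then Delta_as Q2 = Q1; the error of the second step is moved by the
  shifts u \<plusminus> i a pi, which is why the radius grows along the list.\<close>

lemma Delta_solvable_Pspace:
  assumes "\<forall>a\<in>set as. a \<noteq> 0" "R \<ge> Delta_radius as" "q \<in> Pspace (log_branch c)"
  shows "Delta_solvable (log_branch c) as R A q"
  using assms
proof (induction as arbitrary: R A q)
  case Nil
  then show ?case unfolding Delta_solvable_def by (auto intro!: exI[of _ 0])
next
  case (Cons a as)
  define A' where "A' = max A 0"
  define R' where "R' = R - 4 * \<bar>a\<bar> * pi"
  have a: "a \<noteq> 0" using Cons.prems by auto
  have "0 \<le> 4 * \<bar>a\<bar> * pi" by simp
  then have R: "R \<ge> 2" "R \<ge> 4 * \<bar>a\<bar> * pi" "R' \<ge> Delta_radius as"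
    using Cons.prems(2) Delta_radius_ge_two[of as] Delta_radius_Cons[of a as] unfolding R'_def by linarith+
  obtain n where "q \<in> Pspace_deg (log_branch c) n" using Cons.prems(3) Pspace_iff_Pspace_deg by blast
  then have "Delta_solvable (log_branch c) [a] R A' q" by (rule Delta_solvable_Pspace_deg[OF a R(1,2)])
  then obtain Q1 M1 where Q1: "Q1 \<in> Pspace (log_branch c)"
      "\<And>u. Re u < 0 \<Longrightarrow> R \<le> norm u \<Longrightarrow> norm (q u - Delta a Q1 u) \<le> M1 * norm u powr (-A')"
    unfolding Delta_solvable_def Delta_list.simps by blast
  obtain Q2 M2 where Q2: "Q2 \<in> Pspace (log_branch c)"
      "\<And>v. Re v < 0 \<Longrightarrow> R' \<le> norm v \<Longrightarrow> norm (Q1 v - Delta_list as Q2 v) \<le> M2 * norm v powr (-A')"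
    using Cons.IH[OF _ R(3) Q1(1), of A'] Cons.prems(1) unfolding Delta_solvable_def by auto
  define M where "M = \<bar>M1\<bar> + 2 * \<bar>M2\<bar> * (3/4) powr (-A')"
  have "norm (q u - Delta_list (a # as) Q2 u) \<le> M * norm u powr (-A)"
    if u: "Re u < 0" "R \<le> norm u" for u
  proof -
    have nu: "norm u \<ge> 1" using u R by auto
    have "q u - Delta_list (a # as) Q2 u = (q u - Delta a Q1 u) + Delta a (\<lambda>v. Q1 v - Delta_list as Q2 v) u"
      by (simp add: Delta_def)
    then have "norm (q u - Delta_list (a # as) Q2 u)
        \<le> norm (q u - Delta a Q1 u) + norm (Delta a (\<lambda>v. Q1 v - Delta_list as Q2 v) u)"
      by (metis norm_triangle_ineq)
    also have "\<dots> \<le> \<bar>M1\<bar> * norm u powr (-A') + 2 * \<bar>M2\<bar> * (3/4) powr (-A') * norm u powr (-A')"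
    proof (rule add_mono)
      show "norm (q u - Delta a Q1 u) \<le> \<bar>M1\<bar> * norm u powr (-A')"
        by (rule order_trans[OF Q1(2)[OF u]]) (simp add: mult_right_mono)
      show "norm (Delta a (\<lambda>v. Q1 v - Delta_list as Q2 v) u) \<le> 2 * \<bar>M2\<bar> * (3/4) powr (-A') * norm u powr (-A')"
        by (rule norm_Delta_le_shifted_bound[OF _ _ Q2(2) u(1)]) (use R u Delta_radius_ge_two[of as] in \<open>auto simp: A'_def R'_def\<close>)
    qed
    also have "\<dots> = M * norm u powr (-A')" by (simp add: M_def algebra_simps)
    also have "\<dots> \<le> M * norm u powr (-A)"
      using nu by (intro mult_left_mono powr_mono) (auto simp: A'_def M_def)
    finally show ?thesis .
  qed
  with Q2(1) show ?case unfolding Delta_solvable_def by blast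
qed

section \<open>Taylor expansion in two variables\<close>

lemma holomorphic2_on_holomorphic_fst:
  assumes "holomorphic2_on g U" "open S" "\<And>z. z \<in> S \<Longrightarrow> (z, w) \<in> U"
  shows "(\<lambda>z. g (z, w)) holomorphic_on S"
proof -
  have "\<exists>f'. ((\<lambda>z. g (z, w)) has_field_derivative f') (at z)" if z: "z \<in> S" for z
  proof -
    obtain D where D: "(g has_derivative D) (at (z, w))" "\<forall>(c::complex) v. D (c * fst v, c * snd v) = c * D v"
      using assms(1) assms(3)[OF z] unfolding holomorphic2_on_def by blast
    have "((\<lambda>z. (z, w)) has_derivative (\<lambda>h. (h, 0))) (at z)"
      by (auto intro!: derivative_eq_intros)
    then have "((\<lambda>z. g (z, w)) has_derivative (\<lambda>h. D (h, 0))) (at z)"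
      using has_derivative_compose D(1) by fastforce
    moreover have "(\<lambda>h. D (h, 0)) = (\<lambda>h. D (1, 0) * h)"
      using D(2) by (metis fst_conv snd_conv mult_1_right mult_zero_right mult.commute)
    ultimately show ?thesis unfolding has_field_derivative_def by (metis mult.commute)
  qed
  then show ?thesis using assms(2) by (simp add: holomorphic_on_open)
qed

lemma holomorphic2_on_holomorphic_snd:
  assumes "holomorphic2_on g U" "open S" "\<And>w. w \<in> S \<Longrightarrow> (z, w) \<in> U"
  shows "(\<lambda>w. g (z, w)) holomorphic_on S"
proof -
  have "\<exists>f'. ((\<lambda>w. g (z, w)) has_field_derivative f') (at w)" if w: "w \<in> S" for w
  proof -
    obtain D where D: "(g has_derivative D) (at (z, w))" "\<forall>(c::complex) v. D (c * fst v, c * snd v) = c * D v"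
      using assms(1) assms(3)[OF w] unfolding holomorphic2_on_def by blast
    have "((\<lambda>w. (z, w)) has_derivative (\<lambda>h. (0, h))) (at w)"
      by (auto intro!: derivative_eq_intros)
    then have "((\<lambda>w. g (z, w)) has_derivative (\<lambda>h. D (0, h))) (at w)"
      using has_derivative_compose D(1) by fastforce
    moreover have "(\<lambda>h. D (0, h)) = (\<lambda>h. D (0, 1) * h)"
      using D(2) by (metis fst_conv snd_conv mult_1_right mult_zero_right mult.commute)
    ultimately show ?thesis unfolding has_field_derivative_def by (metis mult.commute)
  qed
  then show ?thesis using assms(2) by (simp add: holomorphic_on_open)
qed

lemma holomorphic2_on_imp_continuous_on:
  assumes "holomorphic2_on g U"
  shows "continuous_on U g"
proof (rule continuous_at_imp_continuous_on, rule ballI)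
  fix z assume "z \<in> U"
  then obtain D where "(g has_derivative D) (at z)" using assms unfolding holomorphic2_on_def by blast
  then show "isCont g z" by (rule has_derivative_continuous)
qed

lemma continuous_on_contour_integral_circlepath_param:
  fixes h :: "complex \<Rightarrow> complex \<Rightarrow> complex"
  assumes rho: "\<rho> > 0" and cont: "continuous_on (sphere 0 \<rho> \<times> W) (\<lambda>p. h (fst p) (snd p))"
  shows "continuous_on W (\<lambda>w. contour_integral (circlepath 0 \<rho>) (\<lambda>z. h z w))"
proof -
  let ?g = "circlepath 0 \<rho>"
  define v where "v t = 2 * pi * \<i> * \<rho> * exp (2 * of_real pi * \<i> * t)" for t :: real
  have eq: "contour_integral ?g (\<lambda>z. h z w) = integral (cbox 0 1) (\<lambda>t. h (?g t) w * v t)" for w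
    unfolding contour_integral_integral cbox_interval v_def vector_derivative_circlepath by simp
  have c1: "continuous_on (W \<times> cbox 0 1) (\<lambda>p. (?g (snd p), fst p))"
  proof (intro continuous_on_Pair continuous_on_fst)
    have "continuous_on {0..1} ?g" using path_circlepath unfolding path_def by blast
    then show "continuous_on (W \<times> cbox 0 1) (\<lambda>p. ?g (snd p))"
      unfolding cbox_interval by (rule continuous_on_compose2[OF _ continuous_on_snd]) auto
  qed (rule continuous_on_id)
  have "(\<lambda>p. (?g (snd p), fst p)) ` (W \<times> cbox 0 1) \<subseteq> sphere 0 \<rho> \<times> W"
    using rho path_image_def[of ?g] by (auto simp: cbox_interval)
  then have c2: "continuous_on (W \<times> cbox 0 1) (\<lambda>p. h (?g (snd p)) (fst p))"
    using continuous_on_compose2[OF cont c1] by simp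
  have "continuous_on (W \<times> cbox 0 1) (\<lambda>(w, t). h (?g t) w * v t)"
    using continuous_on_mult[OF c2, of "\<lambda>p. v (snd p)"] unfolding v_def
    by (simp add: case_prod_beta continuous_intros)
  from integral_continuous_on_param[OF this] show ?thesis unfolding eq .
qed

definition taylor_coeff :: "(complex \<Rightarrow> complex) \<Rightarrow> nat \<Rightarrow> complex" where
  "taylor_coeff F i = (deriv ^^ i) F 0 / fact i"

lemma taylor_coeff_has_contour_integral:
  assumes "F holomorphic_on ball 0 R" "0 < \<rho>" "\<rho> < R"
  shows "((\<lambda>w. F w / w ^ Suc j) has_contour_integral (2 * pi * \<i> * taylor_coeff F j)) (circlepath 0 \<rho>)"
proof -
  have "continuous_on (cball 0 \<rho>) F"
    using assms by (intro continuous_on_subset[OF holomorphic_on_imp_continuous_on[OF assms(1)]]) auto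
  moreover have "F holomorphic_on ball 0 \<rho>"
    using assms by (intro holomorphic_on_subset[OF assms(1)]) auto
  ultimately have "(\<lambda>w. F w / (w - 0) ^ Suc j) contour_integrable_on circlepath 0 \<rho>"
    "(deriv ^^ j) F 0 = fact j / (2 * pi * \<i>) * contour_integral (circlepath 0 \<rho>) (\<lambda>w. F w / (w - 0) ^ Suc j)"
    using Cauchy_higher_derivative_integral_circlepath[where z=0 and r=\<rho> and w=0 and k=j] assms(2) by auto
  then show ?thesis unfolding taylor_coeff_def
    by (auto dest!: has_contour_integral_integral)
qed

lemma continuous_on_taylor_coeff_sphere:
  fixes g :: "complex \<times> complex \<Rightarrow> complex"
  assumes \<rho>: "0 < \<rho>" "\<rho> < R" and cont: "continuous_on (cball 0 \<rho> \<times> cball 0 \<rho>) g"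
    and holo: "\<And>w. norm w \<le> \<rho> \<Longrightarrow> (\<lambda>z. g (z, w)) holomorphic_on ball 0 R"
  shows "continuous_on (sphere 0 \<rho>) (\<lambda>w. taylor_coeff (\<lambda>z. g (z, w)) i)"
proof -
  have "continuous_on (sphere 0 \<rho> \<times> sphere 0 \<rho>) g"
    using \<rho> by (intro continuous_on_subset[OF cont]) auto
  then have "continuous_on (sphere 0 \<rho> \<times> sphere 0 \<rho>) (\<lambda>p. g (fst p, snd p) / fst p ^ Suc i)"
    using \<rho> by (auto intro!: continuous_intros)
  then have "continuous_on (sphere 0 \<rho>) (\<lambda>w. contour_integral (circlepath 0 \<rho>) (\<lambda>z. g (z, w) / z ^ Suc i))"
    by (rule continuous_on_contour_integral_circlepath_param[OF \<rho>(1), where h = "\<lambda>z w. g (z, w) / z ^ Suc i"])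
  then have "continuous_on (sphere 0 \<rho>)
      (\<lambda>w. 1 / (2 * pi * \<i>) * contour_integral (circlepath 0 \<rho>) (\<lambda>z. g (z, w) / z ^ Suc i))"
    by (intro continuous_on_mult continuous_on_const)
  moreover have "1 / (2 * pi * \<i>) * contour_integral (circlepath 0 \<rho>) (\<lambda>z. g (z, w) / z ^ Suc i)
      = taylor_coeff (\<lambda>z. g (z, w)) i"
    if "w \<in> sphere 0 \<rho>" for w
    using contour_integral_unique[OF taylor_coeff_has_contour_integral[OF holo \<rho>, of w i]] that by simp
  ultimately show ?thesis by (rule continuous_on_eq)
qed

text \<open>The coefficient of z1^i z2^j in the Taylor expansion of g at the origin, via Cauchy's
  formula on the circle of radius rho in each variable.\<close>

definition bivariate_coeff :: "(complex \<times> complex \<Rightarrow> complex) \<Rightarrow> real \<Rightarrow> nat \<Rightarrow> nat \<Rightarrow> complex" where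
  "bivariate_coeff g \<rho> i j =
     1 / (2 * pi * \<i>) * contour_integral (circlepath 0 \<rho>) (\<lambda>w. taylor_coeff (\<lambda>z. g (z, w)) i / w ^ Suc j)"

lemma taylor_coeff_remainder_bound:
  assumes "F holomorphic_on ball 0 R" "0 < \<rho>" "\<rho> < R"
    and "\<And>w. norm w = \<rho> \<Longrightarrow> norm (F w) \<le> B" "norm z \<le> \<rho> / 2"
  shows "norm (F z - (\<Sum>k<N. taylor_coeff F k * z ^ k)) \<le> 2 * B * (norm z / \<rho>) ^ N"
  using holomorphic_taylor_remainder_bound[OF assms(1-3), of B z N] assms(4,5)
  by (simp add: taylor_coeff_def)

lemma taylor_coeff_bivariate_approx:
  fixes g :: "complex \<times> complex \<Rightarrow> complex"
  assumes \<rho>: "0 < \<rho>" "\<rho> < R" and cont: "continuous_on (cball 0 \<rho> \<times> cball 0 \<rho>) g"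
    and holo1: "\<And>w. norm w \<le> \<rho> \<Longrightarrow> (\<lambda>z. g (z, w)) holomorphic_on ball 0 R"
    and holo2: "\<And>z. norm z \<le> \<rho> \<Longrightarrow> (\<lambda>w. g (z, w)) holomorphic_on ball 0 R"
    and B: "\<And>z w. norm z \<le> \<rho> \<Longrightarrow> norm w \<le> \<rho> \<Longrightarrow> norm (g (z, w)) \<le> B"
    and z: "norm z \<le> \<rho> / 2"
  shows "norm (taylor_coeff (\<lambda>w. g (z, w)) j - (\<Sum>i<N. bivariate_coeff g \<rho> i j * z ^ i))
    \<le> 2 * B * (norm z / \<rho>) ^ N / \<rho> ^ j"
proof -
  define q where "q = norm z / \<rho>"
  have q: "0 \<le> q" using \<rho> by (simp add: q_def)
  have "norm (g (0, 0)) \<le> B" using B \<rho> by simp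
  then have "0 \<le> B" using norm_ge_zero[of "g (0, 0)"] by linarith
  have coeff: "((\<lambda>w. taylor_coeff (\<lambda>z. g (z, w)) i / w ^ Suc j) has_contour_integral
      (2 * pi * \<i> * bivariate_coeff g \<rho> i j)) (circlepath 0 \<rho>)" for i
  proof -
    have "continuous_on (sphere 0 \<rho>) (\<lambda>w. taylor_coeff (\<lambda>z. g (z, w)) i / w ^ Suc j)"
      using \<rho> by (intro continuous_intros continuous_on_taylor_coeff_sphere[OF \<rho> cont holo1]) auto
    then have "(\<lambda>w. taylor_coeff (\<lambda>z. g (z, w)) i / w ^ Suc j) contour_integrable_on (circlepath 0 \<rho>)"
      using \<rho> by (intro contour_integrable_continuous_circlepath) auto
    then show ?thesis unfolding bivariate_coeff_def by (simp add: has_contour_integral_integral)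
  qed
  have "((\<lambda>w. g (z, w) / w ^ Suc j - (\<Sum>i<N. z ^ i * (taylor_coeff (\<lambda>z. g (z, w)) i / w ^ Suc j)))
      has_contour_integral (2 * pi * \<i> * taylor_coeff (\<lambda>w. g (z, w)) j
        - (\<Sum>i<N. z ^ i * (2 * pi * \<i> * bivariate_coeff g \<rho> i j)))) (circlepath 0 \<rho>)"
    using z \<rho> by (intro has_contour_integral_diff taylor_coeff_has_contour_integral[OF holo2 \<rho>]
        has_contour_integral_sum has_contour_integral_lmul coeff) auto
  moreover have "norm (g (z, w) / w ^ Suc j - (\<Sum>i<N. z ^ i * (taylor_coeff (\<lambda>z. g (z, w)) i / w ^ Suc j)))
      \<le> 2 * B * q ^ N / \<rho> ^ Suc j" if w: "norm (w - 0) = \<rho>" for w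
  proof -
    have eq: "g (z, w) / w ^ Suc j - (\<Sum>i<N. z ^ i * (taylor_coeff (\<lambda>z. g (z, w)) i / w ^ Suc j))
        = (g (z, w) - (\<Sum>i<N. taylor_coeff (\<lambda>z. g (z, w)) i * z ^ i)) / w ^ Suc j"
      by (simp add: diff_divide_distrib sum_divide_distrib mult_ac)
    have "norm (g (z, w) - (\<Sum>i<N. taylor_coeff (\<lambda>z. g (z, w)) i * z ^ i)) \<le> 2 * B * q ^ N"
      unfolding q_def using w z B by (intro taylor_coeff_remainder_bound[OF holo1 \<rho>]) auto
    moreover have "norm (w ^ Suc j) = \<rho> ^ Suc j" using w by (simp add: norm_mult norm_power)
    ultimately show ?thesis
      unfolding eq norm_divide using \<rho> by (simp add: divide_right_mono)
  qed
  ultimately have "norm (2 * pi * \<i> * taylor_coeff (\<lambda>w. g (z, w)) j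
      - (\<Sum>i<N. z ^ i * (2 * pi * \<i> * bivariate_coeff g \<rho> i j))) \<le> 2 * B * q ^ N / \<rho> ^ Suc j * (2 * pi * \<rho>)"
    using \<rho> \<open>0 \<le> B\<close> q by (intro has_contour_integral_bound_circlepath) auto
  moreover have "2 * pi * \<i> * taylor_coeff (\<lambda>w. g (z, w)) j - (\<Sum>i<N. z ^ i * (2 * pi * \<i> * bivariate_coeff g \<rho> i j))
      = (2 * pi * \<i>) * (taylor_coeff (\<lambda>w. g (z, w)) j - (\<Sum>i<N. bivariate_coeff g \<rho> i j * z ^ i))"
    by (simp add: sum_distrib_left algebra_simps)
  ultimately have "2 * pi * norm (taylor_coeff (\<lambda>w. g (z, w)) j - (\<Sum>i<N. bivariate_coeff g \<rho> i j * z ^ i))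
      \<le> 2 * B * q ^ N / \<rho> ^ Suc j * (2 * pi * \<rho>)"
    by (simp add: norm_mult)
  also have "\<dots> = 2 * pi * (2 * B * q ^ N / \<rho> ^ j)" using \<rho> by (simp add: field_simps)
  finally show ?thesis unfolding q_def using pi_gt_zero by (simp only: mult_le_cancel_left_pos)
qed

lemma bivariate_taylor_approx:
  fixes g :: "complex \<times> complex \<Rightarrow> complex"
  assumes \<rho>: "0 < \<rho>" "\<rho> < R" and cont: "continuous_on (cball 0 \<rho> \<times> cball 0 \<rho>) g"
    and holo1: "\<And>w. norm w \<le> \<rho> \<Longrightarrow> (\<lambda>z. g (z, w)) holomorphic_on ball 0 R"
    and holo2: "\<And>z. norm z \<le> \<rho> \<Longrightarrow> (\<lambda>w. g (z, w)) holomorphic_on ball 0 R"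
  shows "\<exists>B. \<forall>z1 z2. norm z1 \<le> \<rho>/2 \<longrightarrow> norm z2 \<le> \<rho>/2 \<longrightarrow>
    norm (g (z1, z2) - (\<Sum>i<N. \<Sum>j<N. bivariate_coeff g \<rho> i j * z1^i * z2^j))
      \<le> B * ((norm z1/\<rho>)^N + (norm z2/\<rho>)^N)"
proof -
  let ?c = "bivariate_coeff g \<rho>"
  have "compact (g ` (cball 0 \<rho> \<times> cball 0 \<rho>))"
    by (intro compact_continuous_image cont compact_Times compact_cball)
  then obtain B0 where "B0 > 0" "\<forall>x\<in>g ` (cball 0 \<rho> \<times> cball 0 \<rho>). norm x \<le> B0"
    unfolding bounded_pos by (metis compact_imp_bounded bounded_pos)
  then have B0: "B0 > 0" "\<And>z w. norm z \<le> \<rho> \<Longrightarrow> norm w \<le> \<rho> \<Longrightarrow> norm (g (z, w)) \<le> B0"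
    by auto
  have "norm (g (z1, z2) - (\<Sum>i<N. \<Sum>j<N. ?c i j * z1^i * z2^j))
      \<le> 2 * B0 * (real N + 1) * ((norm z1/\<rho>)^N + (norm z2/\<rho>)^N)"
    if z1: "norm z1 \<le> \<rho>/2" and z2: "norm z2 \<le> \<rho>/2" for z1 z2
  proof -
    define q1 where "q1 = norm z1 / \<rho>"
    define q2 where "q2 = norm z2 / \<rho>"
    have q: "0 \<le> q1" "0 \<le> q2" "q2 \<le> 1" using z2 \<rho> by (auto simp: q1_def q2_def)
    define b where "b j = taylor_coeff (\<lambda>w. g (z1, w)) j" for j
    have split: "g (z1, z2) - (\<Sum>i<N. \<Sum>j<N. ?c i j * z1^i * z2^j)
        = (g (z1, z2) - (\<Sum>j<N. b j * z2 ^ j)) + (\<Sum>j<N. (b j - (\<Sum>i<N. ?c i j * z1 ^ i)) * z2 ^ j)"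
    proof -
      have "(\<Sum>i<N. \<Sum>j<N. ?c i j * z1^i * z2^j) = (\<Sum>j<N. (\<Sum>i<N. ?c i j * z1 ^ i) * z2 ^ j)"
        by (subst sum.swap) (simp add: sum_distrib_right)
      then show ?thesis by (simp add: sum_subtractf left_diff_distrib algebra_simps)
    qed
    have term_le: "norm ((b j - (\<Sum>i<N. ?c i j * z1 ^ i)) * z2 ^ j) \<le> 2 * B0 * q1 ^ N" for j
    proof -
      have "norm ((b j - (\<Sum>i<N. ?c i j * z1 ^ i)) * z2 ^ j) \<le> 2 * B0 * q1 ^ N / \<rho> ^ j * norm z2 ^ j"
        unfolding norm_mult norm_power b_def q1_def
        by (intro mult_right_mono taylor_coeff_bivariate_approx[OF \<rho> cont holo1 holo2 B0(2)] z1) auto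
      also have "\<dots> = 2 * B0 * q1 ^ N * q2 ^ j" using \<rho> by (simp add: q2_def power_divide)
      also have "\<dots> \<le> 2 * B0 * q1 ^ N" using q B0 by (simp add: mult_left_le power_le_one)
      finally show ?thesis .
    qed
    have "norm (g (z1, z2) - (\<Sum>i<N. \<Sum>j<N. ?c i j * z1^i * z2^j))
        \<le> norm (g (z1, z2) - (\<Sum>j<N. b j * z2 ^ j)) + norm (\<Sum>j<N. (b j - (\<Sum>i<N. ?c i j * z1 ^ i)) * z2 ^ j)"
      unfolding split by (rule norm_triangle_ineq)
    also have "\<dots> \<le> 2 * B0 * q2 ^ N + (\<Sum>j<N. 2 * B0 * q1 ^ N)"
    proof (rule add_mono)
      show "norm (g (z1, z2) - (\<Sum>j<N. b j * z2 ^ j)) \<le> 2 * B0 * q2 ^ N"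
        unfolding b_def q2_def using z1 z2 \<rho> B0(2)
        by (intro taylor_coeff_remainder_bound[OF holo2 \<rho>]) auto
      show "norm (\<Sum>j<N. (b j - (\<Sum>i<N. ?c i j * z1 ^ i)) * z2 ^ j) \<le> (\<Sum>j<N. 2 * B0 * q1 ^ N)"
        by (intro order_trans[OF norm_sum] sum_mono term_le)
    qed
    also have "\<dots> \<le> 2 * B0 * (real N + 1) * (q1 ^ N + q2 ^ N)"
      using B0 q by (simp add: algebra_simps)
    finally show ?thesis unfolding q1_def q2_def .
  qed
  then show ?thesis by blast
qed

lemma holomorphic2_on_taylor_approx:
  fixes g :: "complex \<times> complex \<Rightarrow> complex"
  assumes g: "holomorphic2_on g U" and U: "open U" "(0, 0) \<in> U"
  obtains \<rho> where "\<rho> > 0" "cball 0 \<rho> \<times> cball 0 \<rho> \<subseteq> U"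
    "\<And>N. \<exists>B c. \<forall>z1 z2. norm z1 \<le> \<rho>/2 \<longrightarrow> norm z2 \<le> \<rho>/2 \<longrightarrow>
        norm (g (z1, z2) - (\<Sum>i<N. \<Sum>j<N. c i j * z1^i * z2^j)) \<le> B * ((norm z1/\<rho>)^N + (norm z2/\<rho>)^N)"
proof -
  obtain \<epsilon> where \<epsilon>: "\<epsilon> > 0" "ball (0, 0) \<epsilon> \<subseteq> U"
    using U open_contains_ball by blast
  define \<rho> where "\<rho> = \<epsilon> / 3"
  have \<rho>: "0 < \<rho>" "\<rho> < \<epsilon> / 2" using \<epsilon> by (auto simp: \<rho>_def)
  have inU: "(z, w) \<in> U" if "norm z < \<epsilon> / 2" "norm w < \<epsilon> / 2" for z w
  proof -
    have "norm (z, w) < \<epsilon>" using norm_Pair_le[of z w] that by linarith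
    then have "(z, w) \<in> ball (0, 0) \<epsilon>" by (metis dist_0_norm mem_ball zero_prod_def)
    then show ?thesis using \<epsilon>(2) by blast
  qed
  have sub: "cball 0 \<rho> \<times> cball 0 \<rho> \<subseteq> U" using inU \<rho> by auto
  have "\<exists>B. \<forall>z1 z2. norm z1 \<le> \<rho>/2 \<longrightarrow> norm z2 \<le> \<rho>/2 \<longrightarrow>
      norm (g (z1, z2) - (\<Sum>i<N. \<Sum>j<N. bivariate_coeff g \<rho> i j * z1^i * z2^j))
        \<le> B * ((norm z1/\<rho>)^N + (norm z2/\<rho>)^N)" for N
  proof (rule bivariate_taylor_approx[OF \<rho>])
    show "continuous_on (cball 0 \<rho> \<times> cball 0 \<rho>) g"
      by (rule continuous_on_subset[OF holomorphic2_on_imp_continuous_on[OF g] sub])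
    show "(\<lambda>z. g (z, w)) holomorphic_on ball 0 (\<epsilon> / 2)" if "norm w \<le> \<rho>" for w
      using that \<rho> by (intro holomorphic2_on_holomorphic_fst[OF g] inU) auto
    show "(\<lambda>w. g (z, w)) holomorphic_on ball 0 (\<epsilon> / 2)" if "norm z \<le> \<rho>" for z
      using that \<rho> by (intro holomorphic2_on_holomorphic_snd[OF g] inU) auto
  qed
  then show ?thesis using that \<rho>(1) sub by blast
qed

section \<open>Arbitrary continuous branches of the logarithm\<close>

lemma continuous_branch_eq_log_branch:
  assumes cont: "continuous_on {u. Re u < 0} lg" and branch: "\<forall>u. Re u < 0 \<longrightarrow> exp (lg u) = u"
    and u: "Re u < 0"
  shows "lg u = log_branch (lg (-1)) u"
proof -
  define H where "H = {u::complex. Re u < 0}"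
  have H: "open H" "convex H" unfolding H_def by (simp_all add: open_halfspace_Re_lt convex_halfspace_Re_lt)
  have br: "\<And>z. z \<in> H \<Longrightarrow> exp (lg z) = z" using branch unfolding H_def by blast
  have "((\<lambda>u. lg u - log_branch 0 u) has_field_derivative 0) (at x within H)" if x: "x \<in> H" for x
  proof -
    have "continuous (at x) lg" using cont H(1) x continuous_on_eq_continuous_at unfolding H_def by blast
    then have "(lg has_field_derivative inverse (exp (lg x))) (at x)"
      by (rule has_field_derivative_inverse_basic[OF DERIV_exp exp_not_eq_zero _ H(1) x br])
    moreover have "(log_branch 0 has_field_derivative inverse x) (at x)"
      using x by (intro log_branch_has_field_derivative Re_neg_in_slit_plane) (simp add: H_def)
    ultimately have "((\<lambda>u. lg u - log_branch 0 u) has_field_derivative inverse (exp (lg x)) - inverse x) (at x)"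
      by (rule DERIV_diff)
    moreover have "inverse (exp (lg x)) - inverse x = 0" using br[OF x] by simp
    ultimately have "((\<lambda>u. lg u - log_branch 0 u) has_field_derivative 0) (at x)" by (simp only:)
    then show ?thesis by (rule has_field_derivative_at_within)
  qed
  then obtain C where C: "\<forall>x\<in>H. lg x - log_branch 0 x = C"
    using has_field_derivative_zero_constant[OF H(2)] by blast
  have "-1 \<in> H" "log_branch 0 (-1) = 0" by (simp_all add: H_def log_branch_def)
  then have "C = lg (-1)" using C by (metis diff_zero)
  moreover have "lg u - log_branch 0 u = C" using C u by (simp add: H_def)
  ultimately show ?thesis unfolding log_branch_def by (simp add: algebra_simps)
qed

lemma Delta_list_cong_half_plane:
  assumes "\<And>v. Re v < 0 \<Longrightarrow> F v = G v" "Re u < 0"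
  shows "Delta_list as F u = Delta_list as G u"
  using assms(2)
proof (induction as arbitrary: u)
  case Nil
  then show ?case using assms(1) by simp
next
  case (Cons a as)
  have "Re (u + \<i> * of_real (a * pi)) < 0" "Re (u - \<i> * of_real (a * pi)) < 0" using Cons.prems by auto
  then show ?case using Cons.IH by (simp add: Delta_def)
qed

lemma Delta_solvable_half_plane:
  assumes lg: "\<And>u. Re u < 0 \<Longrightarrow> lg u = log_branch c u"
    and "\<forall>a\<in>set as. a \<noteq> 0" "R \<ge> Delta_radius as" "p \<in> Pspace lg"
  shows "Delta_solvable lg as R A p"
proof -
  obtain p' where p': "p' \<in> Pspace (log_branch c)" "\<And>u. lg u = log_branch c u \<Longrightarrow> p u = p' u"
    using Pspace_change_log[OF assms(4)] by blast
  obtain Q' M where Q': "Q' \<in> Pspace (log_branch c)"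
    "\<And>u. Re u < 0 \<Longrightarrow> R \<le> norm u \<Longrightarrow> norm (p' u - Delta_list as Q' u) \<le> M * norm u powr (-A)"
    using Delta_solvable_Pspace[OF assms(2,3) p'(1)] unfolding Delta_solvable_def by blast
  obtain Q where Q: "Q \<in> Pspace lg" "\<And>u. log_branch c u = lg u \<Longrightarrow> Q' u = Q u"
    using Pspace_change_log[OF Q'(1)] by blast
  have "Delta_list as Q u = Delta_list as Q' u" "p u = p' u" if "Re u < 0" for u
    using Delta_list_cong_half_plane[of Q Q' u as] Q(2) p'(2) lg that by auto
  then have "norm (p u - Delta_list as Q u) \<le> M * norm u powr (-A)" if "Re u < 0" "R \<le> norm u" for u
    using Q'(2)[OF that] that by simp
  then show ?thesis unfolding Delta_solvable_def using Q(1) by blast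
qed

lemma Pspace_antiderivative_half_plane:
  assumes lg: "\<And>u. Re u < 0 \<Longrightarrow> lg u = log_branch c u" and "p \<in> Pspace lg"
  shows "\<exists>P\<in>Pspace lg. \<forall>u. Re u < 0 \<longrightarrow> (P has_field_derivative p u) (at u)"
proof -
  obtain n where "p \<in> Pspace_deg lg n" using assms(2) Pspace_iff_Pspace_deg by blast
  then obtain p' where p': "p' \<in> Pspace_deg (log_branch c) n" "\<And>u. lg u = log_branch c u \<Longrightarrow> p u = p' u"
    using Pspace_deg_change_log by blast
  obtain Q' where Q': "Q' \<in> Pspace_deg (log_branch c) (n+1)"
    "\<And>u. u \<in> slit_plane \<Longrightarrow> (Q' has_field_derivative p' u) (at u)"
    using Pspace_deg_antiderivative[OF p'(1)] by blast
  obtain P where P: "P \<in> Pspace_deg lg (n+1)" "\<And>u. log_branch c u = lg u \<Longrightarrow> Q' u = P u"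
    using Pspace_deg_change_log[OF Q'(1)] by blast
  have "(P has_field_derivative p u) (at u)" if u: "Re u < 0" for u
  proof -
    have "Q' v = P v" if "v \<in> {v. Re v < 0}" for v
      using P(2)[OF sym[OF lg]] that by simp
    then have "(P has_field_derivative p' u) (at u)"
      using u by (intro has_field_derivative_transform_within_open[OF Q'(2)[OF Re_neg_in_slit_plane[OF u]]
          open_halfspace_Re_lt]) auto
    then show ?thesis using p'(2)[OF lg[OF u]] by simp
  qed
  then show ?thesis using P(1) Pspace_degD by blast
qed

lemma inverse_and_log_over_u_small:
  assumes lg: "\<And>u. Re u < 0 \<Longrightarrow> lg u = log_branch c u" and \<rho>: "\<rho> > 0"
  obtains L C where "L \<ge> 1" "C > 0"
    "\<And>u. Re u < -L \<Longrightarrow> norm (1 / u) \<le> C * norm u powr (-1/2)"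
    "\<And>u. Re u < -L \<Longrightarrow> norm (lg u / u) \<le> C * norm u powr (-1/2)"
    "\<And>u. Re u < -L \<Longrightarrow> C * norm u powr (-1/2) \<le> \<rho> / 2"
proof -
  define K where "K = pi + norm c"
  have "K \<ge> 0" unfolding K_def using pi_gt_zero norm_ge_zero[of c] by linarith
  then obtain C1 where C1: "\<And>x::real. x \<ge> 1 \<Longrightarrow> ln x + K \<le> C1 * x powr (1/2)"
    using ln_plus_const_power_le_sqrt[of K 1] by auto
  define C where "C = max 1 C1"
  define L where "L = max 1 ((2 * C / \<rho>)^2)"
  have L: "L \<ge> 1" "L \<ge> (2 * C / \<rho>)^2" and C: "C \<ge> 1" "C1 \<le> C" by (auto simp: L_def C_def)
  have bounds: "norm (1 / u) \<le> C / sqrt (norm u)" "norm (lg u / u) \<le> C / sqrt (norm u)"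
    "C / sqrt (norm u) \<le> \<rho> / 2" if u: "Re u < -L" for u
  proof -
    define x where "x = norm u"
    have xL: "x > L" using u abs_Re_le_cmod[of u] unfolding x_def by linarith
    then have x1: "x \<ge> 1" "sqrt x \<ge> 1" using L by auto
    have "sqrt x * 1 \<le> sqrt x * sqrt x" using x1 by (intro mult_left_mono) auto
    then have "sqrt x \<le> x" using x1 by simp
    then have "1 / x \<le> 1 / sqrt x" using x1 by (intro divide_left_mono) auto
    also have "\<dots> \<le> C / sqrt x" using C x1 by (intro divide_right_mono) auto
    finally have "1 / x \<le> C / sqrt x" .
    then show "norm (1 / u) \<le> C / sqrt (norm u)" by (simp add: x_def norm_divide)
    have "Re u < 0" using u L by linarith
    then have "norm (lg u) \<le> \<bar>ln x\<bar> + pi + norm c"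
      using lg norm_log_branch_le[OF Re_neg_in_slit_plane] unfolding x_def by metis
    also have "\<dots> = ln x + K" using x1 by (simp add: K_def)
    also have "\<dots> \<le> C1 * x powr (1/2)" by (rule C1[OF x1(1)])
    also have "\<dots> \<le> C * sqrt x" using C x1 by (simp add: powr_half_sqrt mult_right_mono)
    finally have "norm (lg u) / x \<le> C * sqrt x / x" using x1 by (intro divide_right_mono) auto
    also have "\<dots> = C / sqrt x"
      using x1 real_sqrt_mult_self[of x] by (simp add: divide_simps)
    finally show "norm (lg u / u) \<le> C / sqrt (norm u)" by (simp add: x_def norm_divide)
    have "(2 * C / \<rho>)^2 \<le> x" using L xL by linarith
    then have "2 * C / \<rho> \<le> sqrt x" by (rule real_le_rsqrt)
    then have "C / sqrt x \<le> \<rho> / 2" using \<rho> x1 by (simp add: field_simps)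
    then show "C / sqrt (norm u) \<le> \<rho> / 2" by (simp add: x_def)
  qed
  have sqrt: "C * norm u powr (-1/2) = C / sqrt (norm u)" if "Re u < -L" for u
  proof -
    have "norm u > 0" using that L abs_Re_le_cmod[of u] by linarith
    then show ?thesis by (simp add: powr_minus_divide powr_half_sqrt)
  qed
  show ?thesis
  proof (rule that[of L C])
    fix u assume "Re u < -L"
    then show "norm (1 / u) \<le> C * norm u powr (-1/2)" "norm (lg u / u) \<le> C * norm u powr (-1/2)"
      "C * norm u powr (-1/2) \<le> \<rho> / 2"
      using bounds sqrt by simp_all
  qed (use L C in auto)
qed

lemma bivariate_poly_in_Pspace_deg:
  "\<exists>p\<in>Pspace_deg l (int m). \<forall>u. u \<noteq> 0 \<longrightarrow>
     p u = u ^ m * (\<Sum>i<N. \<Sum>j<N. c i j * (1 / u) ^ i * (l u / u) ^ j)"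
proof
  show "(\<lambda>u. \<Sum>i<N. \<Sum>j<N. c i j * u powi (int m - int i - int j) * l u ^ j) \<in> Pspace_deg l (int m)"
    by (intro Pspace_deg_sum Pspace_deg_monomial) auto
  have monomial: "c i j * u powi (int m - int i - int j) * l u ^ j = u ^ m * (c i j * (1 / u) ^ i * (l u / u) ^ j)"
    if "u \<noteq> 0" for u :: complex and i j
  proof -
    have "u powi (int m - int i - int j) = u powi int m * u powi (- int i) * u powi (- int j)"
      using that power_int_add[of u "int m" "- int i"] power_int_add[of u "int m - int i" "- int j"] by simp
    also have "\<dots> = u ^ m * (1 / u) ^ i * (1 / u) ^ j"
      by (simp add: power_int_minus power_inverse divide_inverse)
    finally show ?thesis by (simp add: power_divide field_simps)
  qed
  then show "\<forall>u. u \<noteq> 0 \<longrightarrow> (\<Sum>i<N. \<Sum>j<N. c i j * u powi (int m - int i - int j) * l u ^ j)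
      = u ^ m * (\<Sum>i<N. \<Sum>j<N. c i j * (1 / u) ^ i * (l u / u) ^ j)"
    unfolding sum_distrib_left by (intro allI impI sum.cong refl monomial)
qed

lemma meromorphic_log_composition_approx:
  fixes f g :: "complex \<times> complex \<Rightarrow> complex"
  assumes U: "open U" "(0, 0) \<in> U" and g: "holomorphic2_on g U"
    and f: "\<forall>z\<in>U. fst z \<noteq> 0 \<longrightarrow> f z = g z / fst z ^ m"
    and lg: "\<And>u. Re u < 0 \<Longrightarrow> lg u = log_branch c u"
  obtains L where "L \<ge> 1" "\<And>u. Re u < -L \<Longrightarrow> (1 / u, lg u / u) \<in> U"
    "\<And>A. \<exists>p\<in>Pspace lg. \<exists>M. \<forall>u. Re u < -L \<longrightarrow> norm (f (1 / u, lg u / u) - p u) \<le> M * norm u powr (-A)"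
proof -
  obtain \<rho> where \<rho>: "\<rho> > 0" and sub: "cball 0 \<rho> \<times> cball 0 \<rho> \<subseteq> U"
    and taylor: "\<And>N. \<exists>B c. \<forall>z1 z2. norm z1 \<le> \<rho>/2 \<longrightarrow> norm z2 \<le> \<rho>/2 \<longrightarrow>
        norm (g (z1, z2) - (\<Sum>i<N. \<Sum>j<N. c i j * z1^i * z2^j)) \<le> B * ((norm z1/\<rho>)^N + (norm z2/\<rho>)^N)"
    using holomorphic2_on_taylor_approx[OF g U] by blast
  obtain L C where L: "L \<ge> 1" "C > 0"
    and small: "\<And>u. Re u < -L \<Longrightarrow> norm (1 / u) \<le> C * norm u powr (-1/2)"
      "\<And>u. Re u < -L \<Longrightarrow> norm (lg u / u) \<le> C * norm u powr (-1/2)"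
      "\<And>u. Re u < -L \<Longrightarrow> C * norm u powr (-1/2) \<le> \<rho> / 2"
    using inverse_and_log_over_u_small[OF lg \<rho>] by blast
  have inU: "(1 / u, lg u / u) \<in> U" if "Re u < -L" for u
    using small[OF that] \<rho> sub by fastforce
  have "\<exists>p\<in>Pspace lg. \<exists>M. \<forall>u. Re u < -L \<longrightarrow> norm (f (1 / u, lg u / u) - p u) \<le> M * norm u powr (-A)" for A
  proof -
    define N where "N = nat \<lceil>2 * (A + real m)\<rceil>"
    have "2 * (A + real m) \<le> real N" unfolding N_def by linarith
    then have NA: "real m - real N / 2 \<le> -A" by simp
    obtain B a where B: "\<And>z1 z2. norm z1 \<le> \<rho>/2 \<Longrightarrow> norm z2 \<le> \<rho>/2 \<Longrightarrow>
        norm (g (z1, z2) - (\<Sum>i<N. \<Sum>j<N. a i j * z1^i * z2^j)) \<le> B * ((norm z1/\<rho>)^N + (norm z2/\<rho>)^N)"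
      using taylor by blast
    obtain p where p: "p \<in> Pspace_deg lg (int m)"
      "\<And>u. u \<noteq> 0 \<Longrightarrow> p u = u ^ m * (\<Sum>i<N. \<Sum>j<N. a i j * (1 / u) ^ i * (lg u / u) ^ j)"
      using bivariate_poly_in_Pspace_deg by blast
    define M where "M = \<bar>B\<bar> * 2 * (C / \<rho>) ^ N"
    have "norm (f (1 / u, lg u / u) - p u) \<le> M * norm u powr (-A)" if u: "Re u < -L" for u
    proof -
      define x where "x = norm u"
      define z1 where "z1 = 1 / u"
      define z2 where "z2 = lg u / u"
      define y where "y = C * x powr (-1/2)"
      have z: "norm z1 \<le> y" "norm z2 \<le> y" "y \<le> \<rho>/2"
        using small[OF u] unfolding x_def y_def z1_def z2_def by auto
      have x: "x \<ge> 1" "u \<noteq> 0" using u L abs_Re_le_cmod[of u] unfolding x_def by auto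
      have "f (z1, z2) = u ^ m * g (z1, z2)"
        using f inU[OF u] x(2) by (simp add: z1_def z2_def power_one_over)
      then have "norm (f (z1, z2) - p u) = x ^ m * norm (g (z1, z2) - (\<Sum>i<N. \<Sum>j<N. a i j * z1^i * z2^j))"
        using p(2)[OF x(2)] by (simp add: z1_def z2_def x_def norm_mult norm_power flip: right_diff_distrib)
      also have "\<dots> \<le> x ^ m * (\<bar>B\<bar> * ((norm z1/\<rho>)^N + (norm z2/\<rho>)^N))"
        using B[of z1 z2] z \<rho> x(1) by (intro mult_left_mono order_trans[OF _ mult_right_mono[OF abs_ge_self]]) auto
      also have "\<dots> \<le> x ^ m * (\<bar>B\<bar> * (2 * (y / \<rho>)^N))"
      proof -
        have "(norm z1/\<rho>)^N \<le> (y/\<rho>)^N" "(norm z2/\<rho>)^N \<le> (y/\<rho>)^N"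
          using z \<rho> by (auto intro!: power_mono divide_right_mono)
        then show ?thesis using x(1) by (intro mult_left_mono) auto
      qed
      also have "\<dots> = M * (x ^ m * (x powr (-1/2)) ^ N)"
        unfolding M_def y_def by (simp add: power_mult_distrib power_divide field_simps)
      also have "x ^ m * (x powr (-1/2)) ^ N = x powr (real m - real N / 2)"
      proof -
        have "(x powr (-1/2)) ^ N = x powr (real N * (-1/2))" by (rule powr_power) (use x(1) in simp)
        moreover have "x ^ m = x powr real m" using powr_realpow[of x m] x(1) by simp
        ultimately show ?thesis by (simp add: powr_add[symmetric])
      qed
      also have "M * x powr (real m - real N / 2) \<le> M * x powr (-A)"
        using NA x(1) L \<rho> by (intro mult_left_mono powr_mono) (auto simp: M_def)
      finally show ?thesis unfolding x_def z1_def z2_def .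
    qed
    then show ?thesis using Pspace_degD[OF p(1)] by blast
  qed
  then show ?thesis using that L(1) inU by blast
qed

lemma Delta_solvable_approx:
  assumes "Delta_solvable l as R A p" "R \<le> L" "0 \<le> L"
    and approx: "\<And>u. Re u < -L \<Longrightarrow> norm (F u - p u) \<le> M * norm u powr (-A)"
  shows "\<exists>Pf\<in>Pspace l. \<exists>M. \<forall>u. Re u < -L \<longrightarrow> norm (F u - Delta_list as Pf u) \<le> M * norm u powr (-A)"
proof -
  obtain Pf M' where Pf: "Pf \<in> Pspace l"
    "\<And>u. Re u < 0 \<Longrightarrow> R \<le> norm u \<Longrightarrow> norm (p u - Delta_list as Pf u) \<le> M' * norm u powr (-A)"
    using assms(1) unfolding Delta_solvable_def by blast
  have "norm (F u - Delta_list as Pf u) \<le> (M + M') * norm u powr (-A)" if u: "Re u < -L" for u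
  proof -
    have "Re u < 0" "R \<le> norm u" using u assms(2,3) abs_Re_le_cmod[of u] by linarith+
    from add_mono[OF approx[OF u] Pf(2)[OF this]] show ?thesis
      using norm_triangle_le[of "F u - p u" "p u - Delta_list as Pf u"] by (simp add: algebra_simps)
  qed
  with Pf(1) show ?thesis by blast
qed

theorem lemma13:
  fixes f g :: "complex \<times> complex \<Rightarrow> complex"
    and U :: "(complex \<times> complex) set"
    and m :: nat
    and lg :: "complex \<Rightarrow> complex"
    and as :: "real list"
  assumes U_open: "open U" and U_0: "(0, 0) \<in> U"
    and g_holo: "holomorphic2_on g U"
    and f_mero: "\<forall>z\<in>U. fst z \<noteq> 0 \<longrightarrow> f z = g z / (fst z) ^ m"
    and lg_cont: "continuous_on {u. Re u < 0} lg"
    and lg_branch: "\<forall>u. Re u < 0 \<longrightarrow> exp (lg u) = u"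
    and as_nz: "\<forall>a\<in>set as. a \<noteq> 0"
  shows "\<exists>L>0.
     (\<forall>u. Re u < -L \<longrightarrow> (1 / u, lg u / u) \<in> U) \<and>
     (\<forall>A::real. \<exists>p\<in>Pspace lg. \<exists>M. \<forall>u. Re u < -L \<longrightarrow>
         cmod (f (1 / u, lg u / u) - p u) \<le> M * cmod u powr (-A)) \<and>
     (\<forall>p\<in>Pspace lg. \<exists>P\<in>Pspace lg. \<forall>u. Re u < -L \<longrightarrow>
         (P has_field_derivative p u) (at u)) \<and>
     (\<forall>A::real. \<exists>Pf\<in>Pspace lg. \<exists>M. \<forall>u. Re u < -L \<longrightarrow>
         cmod (f (1 / u, lg u / u) - Delta_list as Pf u) \<le> M * cmod u powr (-A))"
proof -
  obtain c where lg_eq: "\<And>u. Re u < 0 \<Longrightarrow> lg u = log_branch c u"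
    using continuous_branch_eq_log_branch[OF lg_cont lg_branch] by blast
  obtain L0 where L0: "L0 \<ge> 1" "\<And>u. Re u < -L0 \<Longrightarrow> (1 / u, lg u / u) \<in> U"
    "\<And>A. \<exists>p\<in>Pspace lg. \<exists>M. \<forall>u. Re u < -L0 \<longrightarrow> norm (f (1 / u, lg u / u) - p u) \<le> M * norm u powr (-A)"
    using meromorphic_log_composition_approx[OF U_open U_0 g_holo f_mero lg_eq] by blast
  define L where "L = max L0 (Delta_radius as)"
  have L: "L > 0" "L \<ge> L0" "L \<ge> Delta_radius as" using L0(1) by (auto simp: L_def)
  have far: "Re u < -L0" if "Re u < -L" for u using that L(2) by linarith
  have approx: "\<exists>p\<in>Pspace lg. \<exists>M. \<forall>u. Re u < -L \<longrightarrow> norm (f (1 / u, lg u / u) - p u) \<le> M * norm u powr (-A)"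
    for A using L0(3)[of A] far by blast
  have "\<exists>Pf\<in>Pspace lg. \<exists>M. \<forall>u. Re u < -L \<longrightarrow>
      norm (f (1 / u, lg u / u) - Delta_list as Pf u) \<le> M * norm u powr (-A)" for A
  proof -
    obtain p M where p: "p \<in> Pspace lg"
      "\<And>u. Re u < -L \<Longrightarrow> norm (f (1 / u, lg u / u) - p u) \<le> M * norm u powr (-A)"
      using approx by blast
    have "Delta_solvable lg as (Delta_radius as) A p"
      using lg_eq as_nz order_refl p(1) by (rule Delta_solvable_half_plane)
    then show ?thesis by (rule Delta_solvable_approx[OF _ L(3) less_imp_le[OF L(1)] p(2)])
  qed
  moreover have "\<exists>P\<in>Pspace lg. \<forall>u. Re u < -L \<longrightarrow> (P has_field_derivative p u) (at u)" if p: "p \<in> Pspace lg" for p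
  proof -
    obtain P where "P \<in> Pspace lg" "\<And>u. Re u < 0 \<Longrightarrow> (P has_field_derivative p u) (at u)"
      using Pspace_antiderivative_half_plane[OF lg_eq p] by blast
    then show ?thesis using L(1) by (intro bexI[of _ P] allI impI) auto
  qed
  moreover have "(1 / u, lg u / u) \<in> U" if "Re u < -L" for u using L0(2) far that by blast
  ultimately show ?thesis using L(1) approx by blast
qed
end
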